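(* Let $\mathcal{F}$ be a non-Archimedean local field and fix $\alpha\in\mathcal{F}$ with $\alpha\neq 0$. (a) If $\operatorname{char}\mathcal{F}=0$, then for Haar-almost every $x\in\mathcal{F}$ with $|x|_\mathfrak{p}>1$, the sequence $([\alpha x^n])_{n\ge 1}$ is uniformly distributed in $\mathcal{O}$. (b) If $\operatorname{char}\mathcal{F}=p>0$, then for Haar-almost every $x\in\mathcal{F}$ with $|x|_\mathfrak{p}>1$, the subsequence $([\alpha x^n])_{n\ge 1,\ p\nmid n}$ (indexed by the positive integers $n$ not divisible by $p$, in increasing order) is uniformly distributed in $\mathcal{O}$.
   Context: $\mathcal{F}$ is a non-Archimedean local field (complete w.r.t. a discrete valuation, finite residue field), with normalized valuation $v_\mathfrak{p}$, valuation ring $\mathcal{O}=\{|x|_\mathfrak{p}\le 1\}$, maximal ideal $\mathfrak{p}$, $q=\#\mathcal{O}/\mathfrak{p}$, absolute value $|x|_\mathfrak{p}=q^{-v_\mathfrak{p}(x)}$, and a fixed prime element $\pi$ ($v_\mathfrak{p}(\pi)=1$). Fix a complete set $C\subset\mathcal{O}$ of representatives of $\mathcal{O}/\mathfrak{p}$ with $0\in C$; every $x\in\mathcal{F}$ is uniquely $x=\sum_{n\ge v}c_n\pi^n$ with $c_n\in C$. The integral part is $[x]=\sum_{n\ge 0}c_n\pi^n\in\mathcal{O}$. For $a\in\mathcal{F}$, $k\in\mathbb{Z}$, $D(a,q^k)=\{x:|x-a|_\mathfrak{p}\le q^k\}$. Haar measure $\mu$ on $\mathcal{F}$ is normalized by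 $\mu(\mathcal{O})=1$. A sequence $(x_n)\subset\mathcal{O}$ is uniformly distributed in $\mathcal{O}$ if for every $a\in\mathcal{O}$ and $k\in\mathbb{N}$, $\lim_{N\to\infty}\frac1N\#\{1\le n\le N: x_n\in D(a,q^{-k})\}=q^{-k}$. *)

theory Defs
  imports "HOL-Analysis.Analysis" "HOL-Library.Infinite_Set"
begin

text \<open>A non-Archimedean local field is modelled as a field type 'a together with
 a normalized discrete valuation v (only meaningful on nonzero elements), a fixed prime
 element prm (v prm = 1) and a fixed finite complete set C of representatives of the
 residue field O/p with 0 in C.  q = card C is the size of the residue field.\<close>

definition resq :: "'a set \<Rightarrow> nat" where
  "resq C = card C"

definition absp :: "('a::field \<Rightarrow> int) \<Rightarrow> 'a set \<Rightarrow> 'a \<Rightarrow> real" where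
  "absp v C x = (if x = 0 then 0 else real (resq C) powr (- real_of_int (v x)))"

definition valring :: "('a::field \<Rightarrow> int) \<Rightarrow> 'a set" where
  "valring v = {x. x = 0 \<or> v x \<ge> 0}"

definition maxideal :: "('a::field \<Rightarrow> int) \<Rightarrow> 'a set" where
  "maxideal v = {x. x = 0 \<or> v x \<ge> 1}"

definition disc :: "('a::field \<Rightarrow> int) \<Rightarrow> 'a set \<Rightarrow> 'a \<Rightarrow> int \<Rightarrow> 'a set" where
  "disc v C a k = {x. absp v C (x - a) \<le> real (resq C) powr (real_of_int k)}"

definition nonarch_local_field :: "('a::field \<Rightarrow> int) \<Rightarrow> 'a \<Rightarrow> 'a set \<Rightarrow> bool" where
  "nonarch_local_field v prm C \<longleftrightarrow>
     (\<forall>x y. x \<noteq> 0 \<longrightarrow> y \<noteq> 0 \<longrightarrow> v (x * y) = v x + v y) \<and>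
     (\<forall>x y. x \<noteq> 0 \<longrightarrow> y \<noteq> 0 \<longrightarrow> x + y \<noteq> 0 \<longrightarrow> v (x + y) \<ge> min (v x) (v y)) \<and>
     prm \<noteq> 0 \<and> v prm = 1 \<and>
     finite C \<and> C \<subseteq> valring v \<and> 0 \<in> C \<and>
     (\<forall>x \<in> valring v. \<exists>!c \<in> C. x - c \<in> maxideal v) \<and>
     (\<forall>s :: nat \<Rightarrow> 'a.
        (\<forall>e>0. \<exists>N. \<forall>m\<ge>N. \<forall>n\<ge>N. absp v C (s m - s n) < e) \<longrightarrow>
        (\<exists>l. \<forall>e>0. \<exists>N. \<forall>n\<ge>N. absp v C (s n - l) < e))"

text \<open>Integral part: [x] = sum of c_n prm^n over n \<ge> 0 of the prm-adic expansion of x with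
 digits in C; equivalently the unique y in O such that x - y is the (finite) part
 sum of c_n prm^n over n < 0 of the expansion, with digits in C.\<close>

definition intpart :: "('a::field \<Rightarrow> int) \<Rightarrow> 'a \<Rightarrow> 'a set \<Rightarrow> 'a \<Rightarrow> 'a" where
  "intpart v prm C x = (THE y. y \<in> valring v \<and>
      (\<exists>N::nat. \<exists>c::nat \<Rightarrow> 'a. (\<forall>n. c n \<in> C) \<and>
          x - y = (\<Sum>n\<in>{1..N}. c n * inverse prm ^ n)))"

definition open_p :: "('a::field \<Rightarrow> int) \<Rightarrow> 'a set \<Rightarrow> 'a set \<Rightarrow> bool" where
  "open_p v C U \<longleftrightarrow> (\<forall>x\<in>U. \<exists>e>0. {y. absp v C (y - x) < e} \<subseteq> U)"

text \<open>Haar measure on the additive group, normalized by mu(O) = 1 (a translation invariant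
 Borel measure; finiteness on compacta follows from mu(O)=1 and invariance).\<close>

definition haar_p :: "('a::field \<Rightarrow> int) \<Rightarrow> 'a set \<Rightarrow> 'a measure \<Rightarrow> bool" where
  "haar_p v C M \<longleftrightarrow>
     space M = UNIV \<and> sets M = sigma_sets UNIV {U. open_p v C U} \<and>
     (\<forall>A \<in> sets M. \<forall>a. emeasure M ((\<lambda>x. a + x) ` A) = emeasure M A) \<and>
     emeasure M (valring v) = 1"

definition unif_distr :: "('a::field \<Rightarrow> int) \<Rightarrow> 'a set \<Rightarrow> (nat \<Rightarrow> 'a) \<Rightarrow> bool" where
  "unif_distr v C s \<longleftrightarrow> (\<forall>n\<ge>1. s n \<in> valring v) \<and>
     (\<forall>a \<in> valring v. \<forall>k::nat.
        (\<lambda>N. real (card {n \<in> {1..N}. s n \<in> disc v C a (- int k)}) / real N)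
          \<longlonglongrightarrow> real (resq C) powr (- real k))"

end

theory Submission
  imports Defs
begin

text \<open>Fix a target disc D(a, q^-k) and let F_n be the set of x with [\<alpha> x^n] in it. On a disc B of
  points with a fixed valuation -m and a fixed leading digit, x \<mapsto> \<alpha> x^n is a similarity on small
  discs with ratio |\<alpha> n x^(n-1)|. Hence F_n fills exactly the fraction q^-k of every sufficiently
  coarse subdisc of B, while F_i is constant on sufficiently fine ones; if n - i is large compared
  with v(n), some scale is both, and F_i, F_n are independent on B. Only O(v(n)) earlier indices fail
  this, and v(n) = O(log n) in characteristic 0, while v(n) = 0 for n prime to p in characteristic p.
  The resulting second moment bound, Chebyshev's inequality along N = l^4 and Borel-Cantelli give
  almost sure convergence of the frequencies of hits on B; countably many choices of B, a and k cover
  almost every x with |x| > 1.\<close>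

section \<open>Counting and real sequences\<close>

lemma card_Collect_bij_betw:
  assumes "bij_betw \<phi> A B" "\<And>r. r \<in> A \<Longrightarrow> P r \<longleftrightarrow> Q (\<phi> r)"
  shows "card {r \<in> A. P r} = card {r \<in> B. Q r}"
proof -
  have "{r \<in> B. Q r} = \<phi> ` {r \<in> A. P r}"
  proof (intro set_eqI iffI)
    fix r' assume "r' \<in> {r \<in> B. Q r}"
    then obtain r where "r \<in> A" "r' = \<phi> r" "Q r'" using assms(1) unfolding bij_betw_def by blast
    thus "r' \<in> \<phi> ` {r \<in> A. P r}" using assms(2) by blast
  next
    fix r' assume "r' \<in> \<phi> ` {r \<in> A. P r}"
    thus "r' \<in> {r \<in> B. Q r}" using assms unfolding bij_betw_def by blast
  qed
  moreover have "inj_on \<phi> {r \<in> A. P r}"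
    using assms(1) unfolding bij_betw_def by (blast intro: inj_on_subset)
  ultimately show ?thesis by (simp add: card_image)
qed

lemma sum_sum_symmetric:
  fixes f :: "nat \<Rightarrow> nat \<Rightarrow> 'b::comm_semiring_1"
  assumes "\<And>i j. f i j = f j i"
  shows "(\<Sum>i<N. \<Sum>j<N. f i j) = (\<Sum>j<N. f j j + 2 * (\<Sum>i<j. f i j))"
proof (induction N)
  case (Suc N)
  have "(\<Sum>j<N. f N j) = (\<Sum>i<N. f i N)" using assms by simp
  thus ?case using Suc.IH by (simp add: sum.distrib mult_2 add_ac)
qed simp

lemma strict_mono_diff_ge:
  assumes "strict_mono (s :: nat \<Rightarrow> nat)" "i \<le> j"
  shows "int (s j) - int (s i) \<ge> int j - int i"
proof -
  have "s (i + d) \<ge> s i + d" for d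
  proof (induction d)
    case (Suc d)
    thus ?case using assms(1) strict_monoD[of s "i + d" "i + Suc d"] by simp
  qed simp
  from this[of "j - i"] show ?thesis using assms(2) by simp
qed

lemma fourth_root_bracket: "N \<ge> 1 \<Longrightarrow> \<exists>u::nat. u \<ge> 1 \<and> u ^ 4 \<le> N \<and> N < (u + 1) ^ 4"
proof (induction N)
  case (Suc N)
  show ?case
  proof (cases "N = 0")
    case True thus ?thesis by (intro exI[of _ 1]) (simp add: eval_nat_numeral)
  next
    case False
    then obtain u where u: "u \<ge> 1" "u ^ 4 \<le> N" "N < (u + 1) ^ 4" using Suc.IH by auto
    show ?thesis
    proof (cases "Suc N < (u + 1) ^ 4")
      case False
      hence "Suc N = (u + 1) ^ 4" using u(3) by simp
      moreover have "(u + 1) ^ 4 < (u + 2) ^ 4" by (rule power_strict_mono) auto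
      ultimately show ?thesis by (intro exI[of _ "u + 1"]) simp
    qed (use u in auto)
  qed
qed simp

lemma abs_diff_le_if_unit_steps:
  fixes a :: "nat \<Rightarrow> real"
  assumes "\<And>N. \<bar>a (Suc N) - a N\<bar> \<le> 1" and "M \<le> N"
  shows "\<bar>a N - a M\<bar> \<le> real (N - M)"
  using assms(2)
proof (induction N)
  case (Suc N)
  show ?case
  proof (cases "M = Suc N")
    case False
    hence "\<bar>a N - a M\<bar> \<le> real (N - M)" "M \<le> N" using Suc by auto
    thus ?thesis using assms(1)[of N] by (simp add: Suc_diff_le)
  qed simp
qed simp

lemma abs_le_at_fourth_power_below:
  fixes a :: "nat \<Rightarrow> real"
  assumes steps: "\<And>N. \<bar>a (Suc N) - a N\<bar> \<le> 1"
    and u: "u \<ge> 1" "u ^ 4 \<le> N" "N < (u + 1) ^ 4"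
  shows "\<bar>a N\<bar> \<le> \<bar>a (u ^ 4)\<bar> + 15 * real u ^ 3"
proof -
  have "real N \<le> real ((u + 1) ^ 4)" using u(3) by (simp only: of_nat_le_iff less_imp_le)
  hence "real N - real (u ^ 4) \<le> real ((u + 1) ^ 4) - real (u ^ 4)" by simp
  also have "\<dots> = 4 * real u ^ 3 + 6 * real u ^ 2 + 4 * real u + 1"
    by (simp add: power_def algebra_simps)
  also have "\<dots> \<le> 15 * real u ^ 3"
  proof -
    have "1 \<le> real u ^ 3" using u(1) by (simp add: one_le_power)
    moreover have "real u ^ 2 \<le> real u ^ 3" using u(1) by (intro power_increasing) simp_all
    moreover have "real u \<le> real u ^ 3" using power_increasing[of 1 3 "real u"] u(1) by simp
    ultimately show ?thesis by linarith
  qed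
  finally have "real (N - u ^ 4) \<le> 15 * real u ^ 3" using u(2) by (simp add: of_nat_diff)
  thus ?thesis using abs_diff_le_if_unit_steps[of a, OF steps u(2)] by linarith
qed

text \<open>A sequence with bounded increments is o(N) once it is o(N) along the fourth powers,
  because consecutive fourth powers near N are only O(N^(3/4)) apart.\<close>

lemma tendsto_zero_if_fourth_powers:
  fixes a :: "nat \<Rightarrow> real"
  assumes steps: "\<And>N. \<bar>a (Suc N) - a N\<bar> \<le> 1"
    and sparse: "\<And>i::nat. eventually (\<lambda>l. \<bar>a ((l + 1) ^ 4)\<bar> < real ((l + 1) ^ 4) / real (Suc i))
                   sequentially"
  shows "(\<lambda>N. a N / real N) \<longlonglongrightarrow> 0"
proof (rule LIMSEQ_I)
  fix r :: real assume r: "r > 0"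
  obtain i :: nat where i: "1 / real (Suc i) < r / 2"
    using reals_Archimedean[of "r / 2"] r by (auto simp: inverse_eq_divide)
  obtain L where L: "\<And>l. l \<ge> L \<Longrightarrow> \<bar>a ((l + 1) ^ 4)\<bar> < real ((l + 1) ^ 4) / real (Suc i)"
    using sparse[of i] unfolding eventually_sequentially by blast
  obtain L' :: nat where L': "15 / real (Suc L') < r / 2"
    using reals_Archimedean[of "r / 30"] r by (auto simp: inverse_eq_divide field_simps)
  have "\<bar>a N\<bar> < real N * r" if N: "N \<ge> (max L L' + 1) ^ 4" for N
  proof -
    have "N \<ge> 1" using N by (metis le_add2 one_le_power order_trans)
    then obtain u where u: "u \<ge> 1" "u ^ 4 \<le> N" "N < (u + 1) ^ 4"
      using fourth_root_bracket by blast
    have "max L L' + 1 < u + 1" using power_less_imp_less_base[of "max L L' + 1" 4 "u + 1"] N u(3) by simp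
    hence uL: "u - 1 \<ge> L" "real u \<ge> real (Suc L')" by auto
    have "\<bar>a (u ^ 4)\<bar> < real (u ^ 4) / real (Suc i)" using L[OF uL(1)] u(1) by simp
    also have "\<dots> \<le> real N * (1 / real (Suc i))" using u(2) by (simp add: divide_right_mono)
    also have "\<dots> \<le> real N * (r / 2)" using i by (intro mult_left_mono) auto
    finally have A: "\<bar>a (u ^ 4)\<bar> < real N * (r / 2)" .
    have "15 * real u ^ 3 = real u ^ 4 * (15 / real u)" using u(1) by (simp add: field_simps power_def)
    also have "\<dots> \<le> real N * (15 / real (Suc L'))"
      using u uL(2) by (intro mult_mono) (simp_all add: frac_le of_nat_power[symmetric] del: of_nat_power)
    also have "\<dots> \<le> real N * (r / 2)" using L' by (intro mult_left_mono) auto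
    finally show ?thesis using abs_le_at_fourth_power_below[of a, OF steps u] A by linarith
  qed
  thus "\<exists>no. \<forall>N\<ge>no. norm (a N / real N - 0) < r"
    using r by (intro exI[of _ "(max L L' + 1) ^ 4"] allI impI)
      (simp add: abs_divide divide_less_eq mult.commute)
qed

lemma unif_distr_cong:
  assumes "\<And>n. n \<ge> 1 \<Longrightarrow> f n = g n"
  shows "unif_distr v C f \<longleftrightarrow> unif_distr v C g"
proof -
  have "{n \<in> {1..N}. f n \<in> D} = {n \<in> {1..N}. g n \<in> D}" for N D using assms by auto
  thus ?thesis unfolding unif_distr_def using assms by simp
qed

lemma infinite_not_dvd: "p > 1 \<Longrightarrow> infinite {n::nat. n \<ge> 1 \<and> \<not> p dvd n}"
  unfolding infinite_nat_iff_unbounded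
proof (intro allI exI conjI)
  fix m assume p: "p > 1"
  have "1 * m \<le> p * m" using p by (intro mult_le_mono1) simp
  thus "p * m + 1 > m" by linarith
  have "\<not> p dvd p * m + 1"
  proof
    assume "p dvd p * m + 1"
    hence "p dvd 1" using dvd_add_right_iff[of p "p * m" 1] by simp
    thus False using p by simp
  qed
  thus "p * m + 1 \<in> {n. n \<ge> 1 \<and> \<not> p dvd n}" by simp
qed

section \<open>Valuations, discs and the integral part\<close>

locale local_field =
  fixes v :: "'a::field \<Rightarrow> int" and prm :: 'a and C :: "'a set"
  assumes local_field: "nonarch_local_field v prm C"
begin

abbreviation q :: nat where "q \<equiv> resq C"

text \<open>frac_ideal r is the fractional ideal p^r, and vball b r below is the disc D(b, q^-r).\<close>

definition frac_ideal :: "int \<Rightarrow> 'a set" where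
  "frac_ideal r = {x. x = 0 \<or> v x \<ge> r}"

definition pi_pow :: "int \<Rightarrow> 'a" where
  "pi_pow r = prm powi r"

lemma v_mult: "x \<noteq> 0 \<Longrightarrow> y \<noteq> 0 \<Longrightarrow> v (x * y) = v x + v y"
  using local_field by (simp add: nonarch_local_field_def)

lemma v_add_ge_min: "x \<noteq> 0 \<Longrightarrow> y \<noteq> 0 \<Longrightarrow> x + y \<noteq> 0 \<Longrightarrow> v (x + y) \<ge> min (v x) (v y)"
  using local_field by (simp add: nonarch_local_field_def)

lemma prm_nonzero: "prm \<noteq> 0" and v_prm: "v prm = 1" and finite_C: "finite C"
  and C_subset_valring: "C \<subseteq> valring v" and zero_in_C: "0 \<in> C"
  and residue_rep_ex1: "\<forall>x \<in> valring v. \<exists>!c \<in> C. x - c \<in> maxideal v"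
  using local_field by (simp_all add: nonarch_local_field_def)

lemma v_one: "v 1 = 0"
  using v_mult[of 1 1] by simp

lemma v_uminus: "x \<noteq> 0 \<Longrightarrow> v (- x) = v x"
  using v_mult[of "-1" "-1"] v_mult[of "-1" x] v_one by simp

lemma v_inverse: "x \<noteq> 0 \<Longrightarrow> v (inverse x) = - v x"
  using v_mult[of x "inverse x"] v_one by simp

lemma v_power: "x \<noteq> 0 \<Longrightarrow> v (x ^ n) = int n * v x"
  by (induction n) (auto simp: v_one v_mult algebra_simps)

lemma zero_in_frac_ideal [simp]: "0 \<in> frac_ideal r"
  by (simp add: frac_ideal_def)

lemma frac_ideal_antimono: "s \<le> r \<Longrightarrow> x \<in> frac_ideal r \<Longrightarrow> x \<in> frac_ideal s"
  by (auto simp: frac_ideal_def)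

lemma frac_ideal_uminus_iff [simp]: "- x \<in> frac_ideal r \<longleftrightarrow> x \<in> frac_ideal r"
  by (cases "x = 0") (auto simp: frac_ideal_def v_uminus)

lemma frac_ideal_add: "x \<in> frac_ideal r \<Longrightarrow> y \<in> frac_ideal r \<Longrightarrow> x + y \<in> frac_ideal r"
  unfolding frac_ideal_def using v_add_ge_min[of x y] by fastforce

lemma frac_ideal_diff: "x \<in> frac_ideal r \<Longrightarrow> y \<in> frac_ideal r \<Longrightarrow> x - y \<in> frac_ideal r"
  using frac_ideal_add[of x r "- y"] by simp

lemma frac_ideal_diff_commute: "x - y \<in> frac_ideal r \<longleftrightarrow> y - x \<in> frac_ideal r"
  using frac_ideal_uminus_iff[of "x - y" r] by simp

lemma frac_ideal_mult: "x \<in> frac_ideal r \<Longrightarrow> y \<in> frac_ideal s \<Longrightarrow> x * y \<in> frac_ideal (r + s)"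
  by (cases "x = 0"; cases "y = 0") (auto simp: frac_ideal_def v_mult)

lemma frac_ideal_sum: "(\<And>i. i \<in> I \<Longrightarrow> f i \<in> frac_ideal r) \<Longrightarrow> sum f I \<in> frac_ideal r"
  by (induction I rule: infinite_finite_induct) (auto intro: frac_ideal_add)

lemma frac_ideal_power: "x \<in> frac_ideal r \<Longrightarrow> x ^ j \<in> frac_ideal (int j * r)"
proof (induction j)
  case 0 thus ?case by (cases "r \<le> 0") (auto simp: frac_ideal_def v_one)
next
  case (Suc j)
  have "x * x ^ j \<in> frac_ideal (r + int j * r)"
    using frac_ideal_mult[OF Suc.prems Suc.IH[OF Suc.prems]] .
  thus ?case by (simp add: algebra_simps)
qed

lemma in_frac_ideal_v: "x \<noteq> 0 \<Longrightarrow> x \<in> frac_ideal (v x)"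
  by (simp add: frac_ideal_def)

lemma v_add_eq_if_dominant:
  assumes "x \<noteq> 0" "y \<in> frac_ideal (v x + 1)"
  shows "x + y \<noteq> 0 \<and> v (x + y) = v x"
proof (cases "y = 0")
  case True thus ?thesis using assms by simp
next
  case False
  hence vy: "v y > v x" using assms by (auto simp: frac_ideal_def)
  have nz: "x + y \<noteq> 0"
  proof
    assume "x + y = 0"
    hence "y = - x" by (simp add: eq_neg_iff_add_eq_0 add.commute)
    thus False using vy v_uminus[OF assms(1)] by simp
  qed
  have "v (x + y) \<ge> v x" using v_add_ge_min[OF assms(1) False nz] vy by simp
  moreover have "v x \<ge> min (v (x + y)) (v (- y))"
    using v_add_ge_min[of "x + y" "- y"] nz False assms(1) by auto
  hence "v x \<ge> v (x + y)" using vy v_uminus[OF False] by auto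
  ultimately show ?thesis using nz by simp
qed

lemma v_eq_if_close:
  assumes "x \<noteq> 0" "x - y \<in> frac_ideal (v x + 1)"
  shows "y \<noteq> 0 \<and> v y = v x"
  using v_add_eq_if_dominant[OF assms(1), of "y - x"] assms(2) frac_ideal_diff_commute by auto

lemma pi_pow_nonzero [simp]: "pi_pow r \<noteq> 0"
  by (simp add: pi_pow_def prm_nonzero)

lemma v_pi_pow [simp]: "v (pi_pow r) = r"
proof (cases "r \<ge> 0")
  case True
  then obtain n where "r = int n" by (metis nonneg_eq_int)
  thus ?thesis using v_power[OF prm_nonzero, of n] v_prm by (simp add: pi_pow_def)
next
  case False
  then obtain n where n: "r = - int n" by (metis nonpos_int_cases linear)
  hence "pi_pow r = inverse (prm ^ n)" by (simp add: pi_pow_def power_int_minus)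
  thus ?thesis using v_power[OF prm_nonzero, of n] v_prm n v_inverse[of "prm ^ n"] prm_nonzero
    by simp
qed

lemma pi_pow_add: "pi_pow (r + s) = pi_pow r * pi_pow s"
  by (simp add: pi_pow_def power_int_add prm_nonzero)

lemma pi_pow_in_frac_ideal [simp]: "pi_pow r \<in> frac_ideal r"
  by (simp add: frac_ideal_def)

lemma pi_pow_0 [simp]: "pi_pow 0 = 1"
  by (simp add: pi_pow_def)

lemma inverse_prm_power: "inverse prm ^ n = pi_pow (- int n)"
  by (simp add: pi_pow_def power_int_minus power_inverse)

lemma frac_ideal_mult_pi_pow_cancel: "y * pi_pow r \<in> frac_ideal (r + s) \<Longrightarrow> y \<in> frac_ideal s"
  using frac_ideal_mult[of "y * pi_pow r" "r + s" "pi_pow (- r)" "- r"]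
  by (simp add: mult.assoc pi_pow_add[symmetric])

lemma frac_ideal_shift: "x \<in> frac_ideal r \<longleftrightarrow> x * pi_pow (- r) \<in> frac_ideal 0"
  by (cases "x = 0") (auto simp: frac_ideal_def v_mult)

lemma valring_eq: "valring v = frac_ideal 0"
  by (auto simp: valring_def frac_ideal_def)

lemma maxideal_eq: "maxideal v = frac_ideal 1"
  by (auto simp: maxideal_def frac_ideal_def)

lemma one_in_valring: "1 \<in> frac_ideal 0" and one_notin_maxideal: "1 \<notin> frac_ideal 1"
  by (simp_all add: frac_ideal_def v_one)

lemma of_nat_in_valring: "of_nat n \<in> frac_ideal 0"
  by (induction n) (simp_all add: frac_ideal_add one_in_valring)

lemma C_subset_frac_ideal_0: "c \<in> C \<Longrightarrow> c \<in> frac_ideal 0"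
  using C_subset_valring valring_eq by auto

lemma residue_rep_unique: "x \<in> frac_ideal 0 \<Longrightarrow> \<exists>!c \<in> C. x - c \<in> frac_ideal 1"
  using residue_rep_ex1 valring_eq maxideal_eq by simp

lemma C_eq_if_congruent: "c \<in> C \<Longrightarrow> c' \<in> C \<Longrightarrow> c - c' \<in> frac_ideal 1 \<Longrightarrow> c = c'"
  using residue_rep_unique[OF C_subset_frac_ideal_0[of c]] by force

lemma v_C: "c \<in> C \<Longrightarrow> c \<noteq> 0 \<Longrightarrow> v c = 0"
  using C_subset_frac_ideal_0[of c] C_eq_if_congruent[of c 0] zero_in_C
  by (force simp: frac_ideal_def)

lemma digit_ex1:
  assumes "x \<in> frac_ideal r"
  shows "\<exists>!c \<in> C. x - c * pi_pow r \<in> frac_ideal (r + 1)"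
proof -
  have iff: "x - d * pi_pow r \<in> frac_ideal (r + 1) \<longleftrightarrow> x * pi_pow (- r) - d \<in> frac_ideal 1" for d
  proof -
    have "(x - d * pi_pow r) * pi_pow (- (r + 1)) = (x * pi_pow (- r) - d) * pi_pow (- 1)"
      by (simp add: algebra_simps pi_pow_add[symmetric])
    thus ?thesis
      using frac_ideal_shift[of "x - d * pi_pow r" "r + 1"] frac_ideal_shift[of _ 1] by simp
  qed
  have "x * pi_pow (- r) \<in> frac_ideal 0" using assms frac_ideal_shift by blast
  from residue_rep_unique[OF this] show ?thesis unfolding iff .
qed

lemma resq_ge_2: "q \<ge> 2"
proof -
  obtain c where c: "c \<in> C" "1 - c \<in> frac_ideal 1"
    using residue_rep_unique[OF one_in_valring] by blast
  have "c \<noteq> 0" using c one_notin_maxideal by auto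
  hence "card {0, c} = 2" by simp
  moreover have "card {0, c} \<le> card C" using c(1) zero_in_C by (intro card_mono finite_C) auto
  ultimately show ?thesis by (simp add: resq_def)
qed

lemma resq_gt_1: "real q > 1"
  using resq_ge_2 by simp

lemma absp_le_iff: "absp v C x \<le> real q powr (real_of_int k) \<longleftrightarrow> x \<in> frac_ideal (- k)"
proof (cases "x = 0")
  case False
  hence "absp v C x \<le> real q powr (real_of_int k) \<longleftrightarrow> - real_of_int (v x) \<le> real_of_int k"
    by (simp add: absp_def powr_le_cancel_iff[OF resq_gt_1])
  thus ?thesis using False by (auto simp: frac_ideal_def)
qed (simp add: absp_def)

lemma absp_less_iff: "absp v C x < real q powr (real_of_int k) \<longleftrightarrow> x \<in> frac_ideal (1 - k)"
proof (cases "x = 0")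
  case False
  hence "absp v C x < real q powr (real_of_int k) \<longleftrightarrow> - real_of_int (v x) < real_of_int k"
    by (simp add: absp_def powr_less_cancel_iff[OF resq_gt_1])
  thus ?thesis using False by (auto simp: frac_ideal_def)
qed (use resq_ge_2 in \<open>simp add: absp_def\<close>)

lemma absp_gt_1_iff: "absp v C x > 1 \<longleftrightarrow> x \<noteq> 0 \<and> v x < 0"
proof -
  have "absp v C x > 1 \<longleftrightarrow> \<not> absp v C x \<le> real q powr (real_of_int 0)"
    using resq_gt_1 by auto
  thus ?thesis unfolding absp_le_iff by (auto simp: frac_ideal_def)
qed

lemma disc_eq: "disc v C a (- int k) = {y. y - a \<in> frac_ideal (int k)}"
  unfolding disc_def using absp_le_iff[of _ "- int k"] by simp

definition vball :: "'a \<Rightarrow> int \<Rightarrow> 'a set" where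
  "vball b r = {y. y - b \<in> frac_ideal r}"

lemma mem_vball: "y \<in> vball b r \<longleftrightarrow> y - b \<in> frac_ideal r"
  by (simp add: vball_def)

lemma vball_translate: "vball b r = (\<lambda>x. b + x) ` frac_ideal r"
  unfolding vball_def by (auto intro: image_eqI[of _ _ "_ - b"])

primrec coset_reps :: "int \<Rightarrow> nat \<Rightarrow> 'a set" where
  "coset_reps lo 0 = {0}"
| "coset_reps lo (Suc T) =
     (\<lambda>(r, c). r + c * pi_pow (lo + int T)) ` (coset_reps lo T \<times> C)"

lemma coset_reps_subset: "r \<in> coset_reps lo T \<Longrightarrow> r \<in> frac_ideal lo"
proof (induction T arbitrary: r)
  case (Suc T)
  then obtain r1 c where rc: "r1 \<in> coset_reps lo T" "c \<in> C" "r = r1 + c * pi_pow (lo + int T)"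
    by auto
  have "c * pi_pow (lo + int T) \<in> frac_ideal (0 + (lo + int T))"
    using frac_ideal_mult C_subset_frac_ideal_0[OF rc(2)] pi_pow_in_frac_ideal by blast
  hence "c * pi_pow (lo + int T) \<in> frac_ideal lo"
    using frac_ideal_antimono[of lo "lo + int T"] by simp
  thus ?case using Suc.IH[OF rc(1)] rc(3) frac_ideal_add by simp
qed simp

lemma finite_coset_reps: "finite (coset_reps lo T)"
  by (induction T) (auto simp: finite_C)

lemma coset_reps_cover:
  "x \<in> frac_ideal lo \<Longrightarrow> \<exists>r \<in> coset_reps lo T. x - r \<in> frac_ideal (lo + int T)"
proof (induction T)
  case (Suc T)
  then obtain r where r: "r \<in> coset_reps lo T" "x - r \<in> frac_ideal (lo + int T)" by auto
  obtain c where c: "c \<in> C" "x - r - c * pi_pow (lo + int T) \<in> frac_ideal (lo + int T + 1)"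
    using digit_ex1[OF r(2)] by blast
  have "r + c * pi_pow (lo + int T) \<in> coset_reps lo (Suc T)" using r(1) c(1) by force
  moreover have "x - (r + c * pi_pow (lo + int T)) \<in> frac_ideal (lo + int (Suc T))"
    using c(2) by (simp add: algebra_simps)
  ultimately show ?case by blast
qed simp

lemma coset_reps_step_inj:
  assumes "r1 \<in> coset_reps lo T" "r1' \<in> coset_reps lo T" "c \<in> C" "c' \<in> C"
    and IH: "\<And>r r'. r \<in> coset_reps lo T \<Longrightarrow> r' \<in> coset_reps lo T \<Longrightarrow>
                r - r' \<in> frac_ideal (lo + int T) \<Longrightarrow> r = r'"
    and d: "(r1 + c * pi_pow (lo + int T)) - (r1' + c' * pi_pow (lo + int T))
              \<in> frac_ideal (lo + int T + 1)"
  shows "r1 = r1' \<and> c = c'"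
proof -
  let ?t = "(c - c') * pi_pow (lo + int T)"
  have t: "?t \<in> frac_ideal (0 + (lo + int T))"
    using frac_ideal_mult[OF frac_ideal_diff[OF C_subset_frac_ideal_0 C_subset_frac_ideal_0]]
      assms(3,4) by simp
  have eq: "r1 - r1' = ((r1 + c * pi_pow (lo + int T)) - (r1' + c' * pi_pow (lo + int T))) - ?t"
    by (simp add: algebra_simps)
  have "r1 - r1' \<in> frac_ideal (lo + int T)"
    unfolding eq using frac_ideal_diff[OF frac_ideal_antimono[OF _ d] t] by simp
  hence r: "r1 = r1'" using IH assms by blast
  hence "?t \<in> frac_ideal (lo + int T + 1)" using d by (simp add: algebra_simps)
  hence "c - c' \<in> frac_ideal 1" using frac_ideal_mult_pi_pow_cancel[of "c - c'" "lo + int T" 1]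
    by simp
  thus ?thesis using r C_eq_if_congruent assms by blast
qed

lemma coset_reps_unique:
  "r \<in> coset_reps lo T \<Longrightarrow> r' \<in> coset_reps lo T \<Longrightarrow> r - r' \<in> frac_ideal (lo + int T) \<Longrightarrow> r = r'"
proof (induction T arbitrary: r r')
  case (Suc T)
  obtain r1 c where rc: "r1 \<in> coset_reps lo T" "c \<in> C" "r = r1 + c * pi_pow (lo + int T)"
    using Suc.prems by auto
  obtain r1' c' where rc': "r1' \<in> coset_reps lo T" "c' \<in> C" "r' = r1' + c' * pi_pow (lo + int T)"
    using Suc.prems by auto
  have "r1 = r1' \<and> c = c'"
    by (rule coset_reps_step_inj[OF rc(1) rc'(1) rc(2) rc'(2) Suc.IH])
      (use Suc.prems(3) rc(3) rc'(3) in \<open>simp_all add: ac_simps\<close>)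
  thus ?case using rc rc' by simp
qed simp

lemma card_coset_reps: "card (coset_reps lo T) = q ^ T"
proof (induction T)
  case (Suc T)
  have "inj_on (\<lambda>(r, c). r + c * pi_pow (lo + int T)) (coset_reps lo T \<times> C)"
  proof (rule inj_onI, clarify)
    fix r1 c r1' c'
    assume as: "r1 \<in> coset_reps lo T" "c \<in> C" "r1' \<in> coset_reps lo T" "c' \<in> C"
      "r1 + c * pi_pow (lo + int T) = r1' + c' * pi_pow (lo + int T)"
    show "r1 = r1' \<and> c = c'"
      by (rule coset_reps_step_inj[OF as(1,3,2,4)]) (use coset_reps_unique as(5) in auto)
  qed
  hence "card (coset_reps lo (Suc T)) = card (coset_reps lo T \<times> C)"
    by (simp add: card_image)
  also have "\<dots> = q ^ Suc T"
    using Suc.IH by (simp add: card_cartesian_product resq_def)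
  finally show ?case .
qed simp

lemma vball_eq_Union:
  "vball b lo = (\<Union>r \<in> coset_reps lo T. vball (b + r) (lo + int T))"
proof
  show "vball b lo \<subseteq> (\<Union>r \<in> coset_reps lo T. vball (b + r) (lo + int T))"
  proof
    fix y assume "y \<in> vball b lo"
    then obtain r where "r \<in> coset_reps lo T" "y - b - r \<in> frac_ideal (lo + int T)"
      using coset_reps_cover[of "y - b" lo T] by (auto simp: mem_vball)
    thus "y \<in> (\<Union>r \<in> coset_reps lo T. vball (b + r) (lo + int T))"
      by (auto simp: mem_vball algebra_simps)
  qed
  show "(\<Union>r \<in> coset_reps lo T. vball (b + r) (lo + int T)) \<subseteq> vball b lo"
  proof clarify
    fix r y assume "r \<in> coset_reps lo T" "y \<in> vball (b + r) (lo + int T)"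
    hence "r \<in> frac_ideal lo" "y - (b + r) \<in> frac_ideal lo"
      using coset_reps_subset frac_ideal_antimono[of lo "lo + int T"] by (auto simp: mem_vball)
    hence "y - (b + r) + r \<in> frac_ideal lo" using frac_ideal_add by blast
    thus "y \<in> vball b lo" by (simp add: mem_vball)
  qed
qed

lemma disjoint_family_vball_coset_reps:
  "disjoint_family_on (\<lambda>r. vball (b + r) (lo + int T)) (coset_reps lo T)"
  unfolding disjoint_family_on_def
proof (intro ballI impI, rule ccontr)
  fix r r' assume as: "r \<in> coset_reps lo T" "r' \<in> coset_reps lo T" "r \<noteq> r'"
    "vball (b + r) (lo + int T) \<inter> vball (b + r') (lo + int T) \<noteq> {}"
  then obtain y where "y - (b + r) \<in> frac_ideal (lo + int T)" "y - (b + r') \<in> frac_ideal (lo + int T)"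
    by (auto simp: mem_vball)
  from frac_ideal_diff[OF this(2,1)] have "r - r' \<in> frac_ideal (lo + int T)"
    by (simp add: algebra_simps)
  thus False using coset_reps_unique as by blast
qed

definition frac_sum :: "(nat \<Rightarrow> 'a) \<Rightarrow> nat \<Rightarrow> 'a" where
  "frac_sum c N = (\<Sum>n\<in>{1..N}. c n * inverse prm ^ n)"

lemma frac_sum_in_frac_ideal: "(\<And>n. c n \<in> C) \<Longrightarrow> frac_sum c N \<in> frac_ideal (- int N)"
  unfolding frac_sum_def
proof (rule frac_ideal_sum)
  fix n assume c: "\<And>n. c n \<in> C" and n: "n \<in> {1..N}"
  have "c n * inverse prm ^ n \<in> frac_ideal (0 + - int n)"
    unfolding inverse_prm_power using frac_ideal_mult[OF C_subset_frac_ideal_0[OF c]] by simp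
  thus "c n * inverse prm ^ n \<in> frac_ideal (- int N)"
    using n frac_ideal_antimono[of "- int N" "- int n"] by simp
qed

lemma frac_sum_Suc: "frac_sum c (Suc N) = frac_sum c N + c (Suc N) * inverse prm ^ Suc N"
  unfolding frac_sum_def by (simp add: sum.cl_ivl_Suc)

lemma frac_sum_pad: "N \<le> N' \<Longrightarrow> frac_sum c N = frac_sum (\<lambda>n. if n \<le> N then c n else 0) N'"
  unfolding frac_sum_def by (rule sum.mono_neutral_cong_left) auto

text \<open>Induction on the length: by the strict triangle inequality the lowest digits must agree.\<close>

lemma frac_sum_eq_if_diff_integral:
  assumes "\<And>n. c n \<in> C" "\<And>n. c' n \<in> C" "frac_sum c N - frac_sum c' N \<in> frac_ideal 0"
  shows "frac_sum c N = frac_sum c' N"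
  using assms(3)
proof (induction N)
  case (Suc N)
  define S where "S = frac_sum c N - frac_sum c' N"
  define d where "d = c (Suc N) - c' (Suc N)"
  have SP: "S \<in> frac_ideal (- int N)"
    unfolding S_def using frac_ideal_diff frac_sum_in_frac_ideal assms(1,2) by blast
  have D: "S + d * inverse prm ^ Suc N \<in> frac_ideal 0"
    using Suc.prems unfolding S_def d_def frac_sum_Suc by (simp add: algebra_simps)
  have d0: "d = 0"
  proof (rule ccontr)
    assume dnz: "d \<noteq> 0"
    have "d \<in> frac_ideal 0"
      unfolding d_def using frac_ideal_diff C_subset_frac_ideal_0 assms(1,2) by blast
    moreover have "d \<notin> frac_ideal 1"
      using C_eq_if_congruent[OF assms(1,2)] dnz unfolding d_def by auto
    ultimately have vd: "v d = 0" using dnz by (auto simp: frac_ideal_def)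
    define x where "x = d * inverse prm ^ Suc N"
    have xnz: "x \<noteq> 0" using dnz prm_nonzero by (simp add: x_def)
    have vx: "v x = - int (Suc N)"
      unfolding x_def inverse_prm_power using v_mult[OF dnz pi_pow_nonzero] vd by simp
    have "S \<in> frac_ideal (v x + 1)" using SP vx by simp
    from v_add_eq_if_dominant[OF xnz this] have "x + S \<notin> frac_ideal 0"
      using vx by (auto simp: frac_ideal_def)
    thus False using D by (simp add: x_def add.commute)
  qed
  hence "S \<in> frac_ideal 0" using D by simp
  hence "frac_sum c N = frac_sum c' N" using Suc.IH unfolding S_def by blast
  thus ?case using d0 unfolding frac_sum_Suc d_def by simp
qed (simp add: frac_sum_def)

lemma integral_frac_decomp_level:
  "y \<in> frac_ideal (- int j) \<Longrightarrow>
     \<exists>z \<in> frac_ideal 0. \<exists>c. (\<forall>n. c n \<in> C) \<and> y - z = frac_sum c j"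
proof (induction j arbitrary: y)
  case 0 thus ?case by (intro bexI[of _ y] exI[of _ "\<lambda>_. 0"]) (auto simp: zero_in_C frac_sum_def)
next
  case (Suc j)
  obtain c0 where c0: "c0 \<in> C" "y - c0 * pi_pow (- int (Suc j)) \<in> frac_ideal (- int j)"
    using digit_ex1[OF Suc.prems] by force
  from Suc.IH[OF c0(2)] obtain z c where zc: "z \<in> frac_ideal 0" "\<forall>n. c n \<in> C"
    "y - c0 * pi_pow (- int (Suc j)) - z = frac_sum c j" by blast
  define c' where "c' = c(Suc j := c0)"
  have "frac_sum c' j = frac_sum c j"
    unfolding frac_sum_def c'_def by (rule sum.cong) auto
  hence "frac_sum c' (Suc j) = frac_sum c j + c0 * pi_pow (- int (Suc j))"
    unfolding frac_sum_Suc inverse_prm_power by (simp add: c'_def)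
  hence "y - z = frac_sum c' (Suc j)" using zc(3) by (simp add: algebra_simps)
  moreover have "\<forall>n. c' n \<in> C" using zc(2) c0(1) by (simp add: c'_def)
  ultimately show ?case using zc(1) by blast
qed

lemma integral_frac_decomp:
  "\<exists>z \<in> frac_ideal 0. \<exists>N c. (\<forall>n. c n \<in> C) \<and> y - z = frac_sum c N"
proof (cases "y \<in> frac_ideal 0")
  case True
  thus ?thesis using zero_in_C by (intro bexI[of _ y] exI[of _ 0] exI[of _ "\<lambda>_. 0"])
    (auto simp: frac_sum_def)
next
  case False
  hence "y \<in> frac_ideal (- int (nat (- v y)))" by (auto simp: frac_ideal_def)
  thus ?thesis using integral_frac_decomp_level by blast
qed

lemma integral_frac_decomp_unique:
  assumes "z \<in> frac_ideal 0" "\<forall>n. c n \<in> C" "y - z = frac_sum c N"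
    and "z' \<in> frac_ideal 0" "\<forall>n. c' n \<in> C" "y - z' = frac_sum c' N'"
  shows "z = z'"
proof -
  define d where "d = (\<lambda>n. if n \<le> N then c n else 0)"
  define d' where "d' = (\<lambda>n. if n \<le> N' then c' n else 0)"
  have e: "frac_sum c N = frac_sum d (max N N')" "frac_sum c' N' = frac_sum d' (max N N')"
    unfolding d_def d'_def by (rule frac_sum_pad; simp)+
  have "\<And>n. d n \<in> C" "\<And>n. d' n \<in> C" using assms(2,5) zero_in_C by (auto simp: d_def d'_def)
  moreover have "frac_sum d (max N N') - frac_sum d' (max N N') = z' - z"
    using assms(3,6) e by (simp add: algebra_simps)
  hence "frac_sum d (max N N') - frac_sum d' (max N N') \<in> frac_ideal 0"
    using frac_ideal_diff[OF assms(4,1)] by simp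
  ultimately have "frac_sum d (max N N') = frac_sum d' (max N N')"
    by (rule frac_sum_eq_if_diff_integral)
  thus ?thesis using assms(3,6) e by (simp add: algebra_simps)
qed

lemma intpart_eqI:
  assumes "z \<in> frac_ideal 0" "\<forall>n. c n \<in> C" "y - z = frac_sum c N"
  shows "intpart v prm C y = z"
  unfolding intpart_def
proof (rule the_equality)
  show "z \<in> valring v \<and> (\<exists>N c. (\<forall>n. c n \<in> C) \<and> y - z = (\<Sum>n = 1..N. c n * inverse prm ^ n))"
    using assms valring_eq by (auto simp: frac_sum_def)
  fix z' assume "z' \<in> valring v \<and>
    (\<exists>N c. (\<forall>n. c n \<in> C) \<and> y - z' = (\<Sum>n = 1..N. c n * inverse prm ^ n))"
  then obtain N' c' where "z' \<in> frac_ideal 0" "\<forall>n. c' n \<in> C" "y - z' = frac_sum c' N'"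
    using valring_eq by (auto simp: frac_sum_def)
  from integral_frac_decomp_unique[OF this assms] show "z' = z" .
qed

lemma intpart_in_valring: "intpart v prm C y \<in> frac_ideal 0"
  using integral_frac_decomp[of y] intpart_eqI by metis

lemma intpart_add_integral:
  assumes "h \<in> frac_ideal 0"
  shows "intpart v prm C (y + h) = intpart v prm C y + h"
proof -
  obtain z N c where zc: "z \<in> frac_ideal 0" "\<forall>n. c n \<in> C" "y - z = frac_sum c N"
    using integral_frac_decomp by blast
  have "intpart v prm C (y + h) = z + h"
    using zc frac_ideal_add[OF zc(1) assms] by (intro intpart_eqI[of _ c _ N]) simp_all
  thus ?thesis using intpart_eqI[OF zc] by simp
qed

lemma power_diff_in_frac_ideal:
  assumes x: "x \<in> frac_ideal (- m)" and u: "u - x \<in> frac_ideal S" and S: "S \<ge> - m"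
  shows "u ^ j - x ^ j \<in> frac_ideal (S + m - m * int j)"
proof (induction j)
  case (Suc j)
  have uP: "u \<in> frac_ideal (- m)"
    using frac_ideal_add[OF x frac_ideal_antimono[OF S u]] by simp
  have "u * (u ^ j - x ^ j) \<in> frac_ideal (- m + (S + m - m * int j))"
    using frac_ideal_mult[OF uP Suc.IH] .
  moreover have "(u - x) * x ^ j \<in> frac_ideal (S + int j * - m)"
    using frac_ideal_mult[OF u frac_ideal_power[OF x]] .
  moreover have "S + m - m * int (Suc j) \<le> - m + (S + m - m * int j)"
    and "S + m - m * int (Suc j) \<le> S + int j * - m"
    by (simp_all add: algebra_simps)
  ultimately have "u * (u ^ j - x ^ j) + (u - x) * x ^ j \<in> frac_ideal (S + m - m * int (Suc j))"
    using frac_ideal_antimono frac_ideal_add by blast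
  thus ?case by (simp add: algebra_simps)
qed simp

lemma power_mult_power_diff_in_frac_ideal:
  assumes x: "x \<in> frac_ideal (- m)" and u: "u - x \<in> frac_ideal S" and u': "u' - x \<in> frac_ideal S"
    and S: "S \<ge> - m"
  shows "u ^ i * u' ^ j - x ^ (i + j) \<in> frac_ideal (S + m - m * int (i + j))"
proof -
  have "u \<in> frac_ideal (- m)"
    using frac_ideal_add[OF x frac_ideal_antimono[OF S u]] by simp
  hence "u ^ i * (u' ^ j - x ^ j) \<in> frac_ideal (int i * - m + (S + m - m * int j))"
    using frac_ideal_mult[OF frac_ideal_power power_diff_in_frac_ideal[OF x u' S]] by blast
  moreover have "(u ^ i - x ^ i) * x ^ j \<in> frac_ideal ((S + m - m * int i) + int j * - m)"
    using frac_ideal_mult[OF power_diff_in_frac_ideal[OF x u S] frac_ideal_power[OF x]] .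
  ultimately have "u ^ i * (u' ^ j - x ^ j) + (u ^ i - x ^ i) * x ^ j
      \<in> frac_ideal (S + m - m * int (i + j))"
    by (intro frac_ideal_add) (simp_all add: algebra_simps)
  thus ?thesis by (simp add: algebra_simps power_add)
qed

text \<open>Near x, with v x = -m, the map y \<mapsto> \<alpha> y^n scales distances by the constant |\<alpha> n x^(n-1)|:
  u^n - u'^n = (u - u') Q, and Q = \<Sum>i<n. u'^(n-1-i) u^i is congruent to n x^(n-1) modulo a
  smaller ideal.\<close>

lemma v_power_map_diff:
  assumes x: "x \<noteq> 0" "v x = - m" and u: "u - x \<in> frac_ideal S" "u' - x \<in> frac_ideal S"
    and S: "S \<ge> - m" and n: "n \<ge> 1" "(of_nat n :: 'a) \<noteq> 0" "v (of_nat n) < S + m"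
    and \<alpha>: "\<alpha> \<noteq> 0" and uu': "u \<noteq> u'"
  shows "\<alpha> * u ^ n \<noteq> \<alpha> * u' ^ n \<and>
    v (\<alpha> * u ^ n - \<alpha> * u' ^ n) = v \<alpha> + v (of_nat n) - m * int (n - 1) + v (u - u')"
proof -
  define Q where "Q = (\<Sum>i<n. u' ^ (n - Suc i) * u ^ i)"
  define N0 where "N0 = of_nat n * x ^ (n - 1)"
  have N0: "N0 \<noteq> 0" "v N0 = v (of_nat n) - m * int (n - 1)"
    using n(2) x v_mult[OF n(2)] v_power[OF x(1)] by (simp_all add: N0_def)
  have "Q - N0 = (\<Sum>i<n. u' ^ (n - Suc i) * u ^ i - x ^ (n - 1))"
    by (simp add: Q_def N0_def sum_subtractf)
  also have "\<dots> \<in> frac_ideal (S + m - m * int (n - 1))"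
  proof (rule frac_ideal_sum)
    fix i assume "i \<in> {..<n}"
    thus "u' ^ (n - Suc i) * u ^ i - x ^ (n - 1) \<in> frac_ideal (S + m - m * int (n - 1))"
      using power_mult_power_diff_in_frac_ideal[OF _ u(2) u(1) S, of "n - Suc i" i] x
      by (simp add: frac_ideal_def)
  qed
  finally have "Q - N0 \<in> frac_ideal (S + m - m * int (n - 1))" .
  moreover have "v N0 + 1 \<le> S + m - m * int (n - 1)" using N0(2) n(3) by simp
  ultimately have "Q - N0 \<in> frac_ideal (v N0 + 1)" using frac_ideal_antimono by blast
  from v_add_eq_if_dominant[OF N0(1) this] have Q: "Q \<noteq> 0" "v Q = v N0" by auto
  have "u ^ n - u' ^ n = (u - u') * Q"
    unfolding Q_def by (rule power_diff_sumr2)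
  hence eq: "\<alpha> * u ^ n - \<alpha> * u' ^ n = \<alpha> * ((u - u') * Q)"
    by (simp add: right_diff_distrib[symmetric])
  have uQ: "(u - u') * Q \<noteq> 0" using uu' Q(1) by simp
  have "\<alpha> * u ^ n - \<alpha> * u' ^ n \<noteq> 0" unfolding eq using \<alpha> uQ by simp
  moreover have "v (\<alpha> * u ^ n - \<alpha> * u' ^ n) = v \<alpha> + v (u - u') + v Q"
    unfolding eq using v_mult[OF \<alpha> uQ] v_mult[of "u - u'" Q] uu' Q(1) by simp
  ultimately show ?thesis using Q(2) N0(2) by simp
qed

definition res_char :: nat where
  "res_char = (LEAST g. g > 0 \<and> of_nat g \<in> frac_ideal 1)"

lemma ex_of_nat_in_maxideal: "\<exists>g::nat. g > 0 \<and> of_nat g \<in> frac_ideal 1"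
proof -
  obtain f where f: "\<And>i::nat. f i \<in> C \<and> of_nat i - f i \<in> frac_ideal 1"
    using residue_rep_unique[OF of_nat_in_valring] by metis
  have "card (f ` {0..q}) \<le> q"
    using f card_mono[OF finite_C, of "f ` {0..q}"] by (auto simp: resq_def)
  hence "\<not> inj_on f {0..q}" by (intro pigeonhole) simp
  then obtain i j where "i \<noteq> j" "f i = f j"
    unfolding inj_on_def by blast
  then obtain i j where ij: "i < j" "f i = f j"
    by (cases "i < j") (auto simp: not_less_iff_gr_or_eq)
  have "of_nat j - of_nat i \<in> frac_ideal 1"
    using frac_ideal_diff[OF f[of j, THEN conjunct2] f[of i, THEN conjunct2]] ij(2) by simp
  thus ?thesis using ij(1) by (intro exI[of _ "j - i"]) (simp add: of_nat_diff)
qed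

lemma res_char_pos: "res_char > 0" and of_nat_res_char_in_maxideal: "of_nat res_char \<in> frac_ideal 1"
  using LeastI_ex[OF ex_of_nat_in_maxideal] by (simp_all add: res_char_def)

lemma res_char_dvd: "of_nat n \<in> frac_ideal 1 \<Longrightarrow> res_char dvd n"
proof (rule ccontr)
  assume n: "of_nat n \<in> frac_ideal 1" and "\<not> res_char dvd n"
  hence r: "n mod res_char > 0" by (simp add: mod_greater_zero_iff_not_dvd)
  have "of_nat res_char * of_nat (n div res_char) \<in> frac_ideal (1 + 0)"
    using frac_ideal_mult[OF of_nat_res_char_in_maxideal of_nat_in_valring] .
  hence "of_nat n - of_nat res_char * of_nat (n div res_char) \<in> frac_ideal 1"
    using frac_ideal_diff[OF n] by simp
  also have "of_nat n - of_nat res_char * of_nat (n div res_char) = (of_nat (n mod res_char) :: 'a)"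
    by (metis add_diff_cancel_left' div_mult_mod_eq of_nat_add of_nat_mult mult.commute)
  finally have "res_char \<le> n mod res_char"
    using r unfolding res_char_def by (intro Least_le) simp
  thus False using mod_less_divisor[OF res_char_pos, of n] by linarith
qed

lemma res_char_ge_2: "res_char \<ge> 2"
proof -
  have "res_char \<noteq> 1" using of_nat_res_char_in_maxideal one_notin_maxideal by auto
  thus ?thesis using res_char_pos by linarith
qed

lemma v_of_nat_le_log:
  "n \<ge> 1 \<Longrightarrow> (of_nat n :: 'a) \<noteq> 0 \<Longrightarrow>
     \<exists>e. res_char ^ e \<le> n \<and> v (of_nat n) \<le> int e * max 0 (v (of_nat res_char))"
proof (induction n rule: less_induct)
  case (less n)
  show ?case
  proof (cases "of_nat n \<in> frac_ideal 1")
    case False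
    hence "v (of_nat n) \<le> 0" using less.prems(2) by (simp add: frac_ideal_def)
    thus ?thesis using less.prems(1) by (intro exI[of _ 0]) simp
  next
    case True
    then obtain n' where n': "n = res_char * n'" using res_char_dvd by blast
    have n'1: "n' \<ge> 1" using less.prems(1) n' by (cases n') auto
    have nz: "(of_nat res_char :: 'a) \<noteq> 0" "(of_nat n' :: 'a) \<noteq> 0" using less.prems(2) n' by auto
    obtain e where e: "res_char ^ e \<le> n'" "v (of_nat n') \<le> int e * max 0 (v (of_nat res_char))"
      using less.IH[OF _ n'1 nz(2)] res_char_ge_2 n' n'1 by auto
    have "v (of_nat n) = v (of_nat res_char) + v (of_nat n')" using n' v_mult[OF nz] by simp
    also have "\<dots> \<le> int (Suc e) * max 0 (v (of_nat res_char))" using e(2) by (simp add: algebra_simps)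
    finally show ?thesis using e(1) n' by (intro exI[of _ "Suc e"]) simp
  qed
qed

lemma v_of_nat_le_sqrt_bound:
  assumes "n \<ge> 1" "(of_nat n :: 'a) \<noteq> 0" "n \<le> l ^ 4"
  shows "v (of_nat n) \<le> 4 * max 0 (v (of_nat res_char)) * int (l ^ 2)"
proof -
  obtain e where e: "res_char ^ e \<le> n" "v (of_nat n) \<le> int e * max 0 (v (of_nat res_char))"
    using v_of_nat_le_log[OF assms(1,2)] by blast
  have "(2::nat) ^ e \<le> res_char ^ e" using res_char_ge_2 by (simp add: power_mono)
  also have "\<dots> \<le> l ^ 4" using e(1) assms(3) by simp
  also have "\<dots> \<le> (2 ^ l) ^ 4" by (rule power_mono) (simp_all add: less_imp_le)
  also have "\<dots> = 2 ^ (4 * l)" by (simp add: power_mult[symmetric] mult.commute)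
  finally have "e \<le> 4 * l" by simp
  also have "\<dots> \<le> 4 * l ^ 2" by (simp add: power2_eq_square)
  finally have "int e \<le> int (4 * l ^ 2)" by (simp only: of_nat_le_iff)
  hence "int e * max 0 (v (of_nat res_char)) \<le> int (4 * l ^ 2) * max 0 (v (of_nat res_char))"
    by (rule mult_right_mono) simp
  thus ?thesis using e(2) by (simp add: algebra_simps)
qed

lemma v_of_nat_eq_0_if_not_dvd_char:
  assumes p: "CHAR('a) = p" "p > 0" and n: "\<not> p dvd n"
  shows "(of_nat n :: 'a) \<noteq> 0 \<and> v (of_nat n) = 0"
proof -
  have "(of_nat p :: 'a) = 0" using p by (simp add: of_nat_eq_0_iff_char_dvd)
  hence "res_char dvd p" using res_char_dvd[of p] by simp
  hence "res_char = p"
    using prime_CHAR_semidom[where 'a = 'a] p res_char_ge_2 unfolding prime_nat_iff by auto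
  hence "of_nat n \<notin> frac_ideal 1" using res_char_dvd n by blast
  thus ?thesis using n p of_nat_in_valring[of n] by (simp add: frac_ideal_def of_nat_eq_0_iff_char_dvd)
qed

end

section \<open>Haar measure of discs\<close>

locale local_field_haar = local_field v prm C for v :: "'a::field \<Rightarrow> int" and prm C +
  fixes M :: "'a measure"
  assumes haar: "haar_p v C M"
begin

lemma space_M: "space M = UNIV"
  and sets_M: "sets M = sigma_sets UNIV {U. open_p v C U}"
  and emeasure_translate: "A \<in> sets M \<Longrightarrow> emeasure M ((\<lambda>x. a + x) ` A) = emeasure M A"
  and emeasure_valring: "emeasure M (frac_ideal 0) = 1"
  using haar valring_eq by (simp_all add: haar_p_def)

lemma sets_M_if_stable:
  assumes "\<And>y h. y \<in> U \<Longrightarrow> h \<in> frac_ideal r \<Longrightarrow> y + h \<in> U"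
  shows "U \<in> sets M"
proof -
  have "open_p v C U"
    unfolding open_p_def
  proof (intro ballI exI conjI subsetI)
    fix y z assume "y \<in> U" and "z \<in> {z. absp v C (z - y) < real q powr real_of_int (1 - r)}"
    moreover have "z - y \<in> frac_ideal r"
      using absp_less_iff[of "z - y" "1 - r"] \<open>z \<in> _\<close> by simp
    ultimately show "z \<in> U" using assms[of y "z - y"] by simp
  qed (use resq_gt_1 in simp)
  thus ?thesis unfolding sets_M by (simp add: sigma_sets.Basic)
qed

lemma sets_vball [measurable]: "vball b r \<in> sets M"
proof (rule sets_M_if_stable)
  fix y h assume "y \<in> vball b r" "h \<in> frac_ideal r"
  thus "y + h \<in> vball b r"
    unfolding mem_vball using frac_ideal_add[of "y - b" r h] by (simp add: algebra_simps)
qed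

lemma emeasure_vball_eq_frac_ideal: "emeasure M (vball b r) = emeasure M (frac_ideal r)"
  using vball_translate[of b r] emeasure_translate[of "frac_ideal r" b] sets_vball[of 0 r]
  by (simp add: vball_def)

lemma emeasure_vball_split:
  "emeasure M (vball b lo) = of_nat (q ^ T) * emeasure M (frac_ideal (lo + int T))"
proof -
  have "emeasure M (vball b lo) = emeasure M (\<Union>r\<in>coset_reps lo T. vball (b + r) (lo + int T))"
    using vball_eq_Union[of b lo T] by simp
  also have "\<dots> = (\<Sum>r\<in>coset_reps lo T. emeasure M (vball (b + r) (lo + int T)))"
    by (rule sum_emeasure[symmetric])
      (auto simp: disjoint_family_vball_coset_reps finite_coset_reps)
  also have "\<dots> = of_nat (q ^ T) * emeasure M (frac_ideal (lo + int T))"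
    by (simp add: emeasure_vball_eq_frac_ideal card_coset_reps)
  finally show ?thesis .
qed

lemma emeasure_frac_ideal: "emeasure M (frac_ideal r) = ennreal (real q powr (- real_of_int r))"
proof (cases "r \<ge> 0")
  case True
  then obtain T where T: "r = int T" by (metis nonneg_eq_int)
  have qT: "real q ^ T > 0" using resq_gt_1 by simp
  have "1 = ennreal (real q ^ T) * emeasure M (frac_ideal r)"
    using emeasure_vball_split[of 0 0 T] emeasure_valring T
    by (simp add: vball_def ennreal_of_nat_eq_real_of_nat)
  moreover have "ennreal (real q ^ T) * ennreal (1 / real q ^ T) = 1"
    using qT by (simp add: ennreal_mult'[symmetric])
  ultimately have "emeasure M (frac_ideal r) = ennreal (1 / real q ^ T)"
    using ennreal_mult_cancel_left[of "ennreal (real q ^ T)" "emeasure M (frac_ideal r)"] qT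
    by auto
  thus ?thesis using resq_gt_1 T by (simp add: powr_minus powr_realpow divide_inverse)
next
  case False
  then obtain T where T: "r = - int T" by (metis nonpos_int_cases linear)
  have "emeasure M (frac_ideal r) = ennreal (real q ^ T)"
    using emeasure_vball_split[of 0 r T] emeasure_valring T
    by (simp add: vball_def ennreal_of_nat_eq_real_of_nat)
  thus ?thesis using resq_gt_1 T by (simp add: powr_realpow)
qed

lemma emeasure_vball: "emeasure M (vball b r) = ennreal (real q powr (- real_of_int r))"
  using emeasure_vball_eq_frac_ideal emeasure_frac_ideal by simp

lemma measure_vball: "measure M (vball b r) = real q powr (- real_of_int r)"
  unfolding measure_def using emeasure_vball by simp

lemma emeasure_subset_vball_finite: "A \<subseteq> vball b r \<Longrightarrow> emeasure M A \<noteq> \<infinity>"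
  using emeasure_mono[of A "vball b r" M] emeasure_vball by (auto simp: top_unique)

lemma measure_Int_vball_sum:
  assumes "\<And>r. r \<in> coset_reps lo T \<Longrightarrow> F \<inter> vball (b + r) (lo + int T) \<in> sets M"
  shows "F \<inter> vball b lo \<in> sets M"
    and "measure M (F \<inter> vball b lo) =
           (\<Sum>r\<in>coset_reps lo T. measure M (F \<inter> vball (b + r) (lo + int T)))"
proof -
  have eq: "F \<inter> vball b lo = (\<Union>r\<in>coset_reps lo T. F \<inter> vball (b + r) (lo + int T))"
    using vball_eq_Union[of b lo T] by auto
  show "F \<inter> vball b lo \<in> sets M"
    unfolding eq by (intro sets.finite_UN finite_coset_reps assms)
  have "emeasure M (F \<inter> vball (b + r) (lo + int T)) \<noteq> \<infinity>" for r
    by (rule emeasure_subset_vball_finite) blast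
  moreover have "disjoint_family_on (\<lambda>r. F \<inter> vball (b + r) (lo + int T)) (coset_reps lo T)"
    using disjoint_family_vball_coset_reps[of b lo T] unfolding disjoint_family_on_def by blast
  ultimately show "measure M (F \<inter> vball b lo) =
          (\<Sum>r\<in>coset_reps lo T. measure M (F \<inter> vball (b + r) (lo + int T)))"
    unfolding eq using assms by (intro measure_finite_Union) (auto simp: finite_coset_reps)
qed

lemma measure_Int_vball_count:
  assumes "\<And>r y. r \<in> coset_reps lo T \<Longrightarrow> y \<in> vball (b + r) (lo + int T) \<Longrightarrow>
             y \<in> F \<longleftrightarrow> b + r \<in> F"
  shows "F \<inter> vball b lo \<in> sets M"
    and "measure M (F \<inter> vball b lo) =
           real (card {r \<in> coset_reps lo T. b + r \<in> F}) * real q powr (- real_of_int (lo + int T))"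
proof -
  have piece: "F \<inter> vball (b + r) (lo + int T) =
      (if b + r \<in> F then vball (b + r) (lo + int T) else {})" if "r \<in> coset_reps lo T" for r
    using assms[OF that] by auto
  hence pieces: "\<And>r. r \<in> coset_reps lo T \<Longrightarrow> F \<inter> vball (b + r) (lo + int T) \<in> sets M"
    by simp
  show "F \<inter> vball b lo \<in> sets M" by (rule measure_Int_vball_sum(1)[OF pieces])
  have "measure M (F \<inter> vball b lo) =
      (\<Sum>r\<in>coset_reps lo T. measure M (F \<inter> vball (b + r) (lo + int T)))"
    by (rule measure_Int_vball_sum(2)[OF pieces])
  also have "\<dots> =
      (\<Sum>r\<in>coset_reps lo T. if b + r \<in> F then real q powr (- real_of_int (lo + int T)) else 0)"
    by (rule sum.cong) (auto simp: piece measure_vball)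
  also have "\<dots> = real (card {r \<in> coset_reps lo T. b + r \<in> F}) * real q powr (- real_of_int (lo + int T))"
    by (simp add: sum.If_cases finite_coset_reps Int_def)
  finally show "measure M (F \<inter> vball b lo) =
      real (card {r \<in> coset_reps lo T. b + r \<in> F}) * real q powr (- real_of_int (lo + int T))" .
qed

lemma measure_Int_vball_scale:
  assumes "\<And>r. r \<in> coset_reps lo T \<Longrightarrow>
      F \<inter> vball (b + r) (lo + int T) \<in> sets M \<and> G \<inter> vball (b + r) (lo + int T) \<in> sets M \<and>
      measure M (F \<inter> vball (b + r) (lo + int T)) = c * measure M (G \<inter> vball (b + r) (lo + int T))"
  shows "measure M (F \<inter> vball b lo) = c * measure M (G \<inter> vball b lo)"
  using measure_Int_vball_sum(2)[of lo T F b] measure_Int_vball_sum(2)[of lo T G b] assms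
  by (simp add: sum_distrib_left)

lemma vball_coset_rep_subset: "r \<in> coset_reps lo T \<Longrightarrow> vball (b + r) (lo + int T) \<subseteq> vball b lo"
  using vball_eq_Union[of b lo T] by blast

lemma coset_rep_in_vball: "r \<in> coset_reps lo T \<Longrightarrow> b + r \<in> vball b lo"
  using coset_reps_subset by (simp add: mem_vball)

lemma card_coset_reps_similarity:
  assumes sim: "\<And>y y'. y \<in> vball x S \<Longrightarrow> y' \<in> vball x S \<Longrightarrow> y \<noteq> y' \<Longrightarrow>
                  f y \<noteq> f y' \<and> v (f y - f y') = L - S + v (y - y')"
    and E: "\<And>y y'. y' - y \<in> frac_ideal (L + int T) \<Longrightarrow> y' \<in> E \<longleftrightarrow> y \<in> E"
  shows "card {r \<in> coset_reps S T. f (x + r) \<in> E} = card {r \<in> coset_reps L T. f x + r \<in> E}"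
proof -
  have "f (x + r) - f x \<in> frac_ideal L" if "r \<in> coset_reps S T" for r
  proof (cases "r = 0")
    case False
    have "v r \<ge> S" using coset_reps_subset[OF that] False by (simp add: frac_ideal_def)
    moreover have "x \<in> vball x S" by (simp add: mem_vball)
    ultimately show ?thesis
      using sim[OF coset_rep_in_vball[OF that]] False by (auto simp: frac_ideal_def)
  qed simp
  hence "\<forall>r \<in> coset_reps S T. \<exists>r' \<in> coset_reps L T. f (x + r) - f x - r' \<in> frac_ideal (L + int T)"
    using coset_reps_cover by blast
  then obtain \<phi> where \<phi>: "\<And>r. r \<in> coset_reps S T \<Longrightarrow>
      \<phi> r \<in> coset_reps L T \<and> f (x + r) - (f x + \<phi> r) \<in> frac_ideal (L + int T)"
    by (metis diff_diff_eq)
  have inj: "inj_on \<phi> (coset_reps S T)"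
  proof (rule inj_onI, rule ccontr)
    fix r1 r2 assume r: "r1 \<in> coset_reps S T" "r2 \<in> coset_reps S T" "\<phi> r1 = \<phi> r2" "r1 \<noteq> r2"
    have "f (x + r1) - f (x + r2) \<in> frac_ideal (L + int T)"
      using frac_ideal_diff[OF \<phi>[OF r(1), THEN conjunct2] \<phi>[OF r(2), THEN conjunct2]] r(3)
      by simp
    moreover have "f (x + r1) \<noteq> f (x + r2) \<and> v (f (x + r1) - f (x + r2)) = L - S + v (r1 - r2)"
      using sim[OF coset_rep_in_vball[OF r(1)] coset_rep_in_vball[OF r(2)]] r(4) by simp
    ultimately have "r1 - r2 \<in> frac_ideal (S + int T)" by (simp add: frac_ideal_def)
    thus False using coset_reps_unique r by blast
  qed
  have "\<phi> ` coset_reps S T = coset_reps L T"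
    using \<phi> inj by (intro card_subset_eq) (auto simp: finite_coset_reps card_image card_coset_reps)
  hence "bij_betw \<phi> (coset_reps S T) (coset_reps L T)" using inj by (simp add: bij_betw_def)
  thus ?thesis by (rule card_Collect_bij_betw) (use E \<phi> in blast)
qed

lemma measure_similarity_vimage:
  assumes sim: "\<And>y y'. y \<in> vball x S \<Longrightarrow> y' \<in> vball x S \<Longrightarrow> y \<noteq> y' \<Longrightarrow>
                  f y \<noteq> f y' \<and> v (f y - f y') = L - S + v (y - y')"
    and E: "\<And>y y'. y' - y \<in> frac_ideal (int k) \<Longrightarrow> y' \<in> E \<longleftrightarrow> y \<in> E"
    and L: "L \<le> int k"
  shows "f -` E \<inter> vball x S \<in> sets M"
    and "measure M (f -` E \<inter> vball x S) =
           real q powr real_of_int (L - S) * measure M (E \<inter> vball (f x) L)"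
proof -
  define T where "T = nat (int k - L)"
  have LT: "L + int T = int k" using L by (simp add: T_def)
  have const: "y \<in> f -` E \<longleftrightarrow> x + r \<in> f -` E"
    if r: "r \<in> coset_reps S T" and y: "y \<in> vball (x + r) (S + int T)" for r y
  proof (cases "y = x + r")
    case False
    have "v (y - (x + r)) \<ge> S + int T" using y False by (simp add: mem_vball frac_ideal_def)
    moreover have "y \<in> vball x S" using vball_coset_rep_subset[OF r] y by blast
    ultimately have "f y - f (x + r) \<in> frac_ideal (int k)"
      using sim[OF _ coset_rep_in_vball[OF r] False] LT by (simp add: frac_ideal_def)
    thus ?thesis using E by simp
  qed simp
  note count = measure_Int_vball_count[of S T x "f -` E", OF const]
  show "f -` E \<inter> vball x S \<in> sets M" by (rule count(1))
  have "measure M (E \<inter> vball (f x) L) =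
      real (card {r \<in> coset_reps L T. f x + r \<in> E}) * real q powr (- real_of_int (L + int T))"
    using LT E by (intro measure_Int_vball_count(2)) (simp add: mem_vball)
  moreover have "card {r \<in> coset_reps S T. f (x + r) \<in> E} = card {r \<in> coset_reps L T. f x + r \<in> E}"
    using LT E by (intro card_coset_reps_similarity[OF sim]) auto
  moreover have "real q powr real_of_int (L - S) * real q powr (- real_of_int (L + int T)) =
      real q powr (- real_of_int (S + int T))"
    by (simp add: powr_add[symmetric])
  ultimately show "measure M (f -` E \<inter> vball x S) =
      real q powr real_of_int (L - S) * measure M (E \<inter> vball (f x) L)"
    using count(2) by simp
qed

definition intpart_hits :: "'a \<Rightarrow> nat \<Rightarrow> 'a set" where
  "intpart_hits a k = {y. intpart v prm C y \<in> vball a (int k)}"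

lemma intpart_hits_cong:
  assumes "y' - y \<in> frac_ideal (int k)"
  shows "y' \<in> intpart_hits a k \<longleftrightarrow> y \<in> intpart_hits a k"
proof -
  have eq: "intpart v prm C y' - a = (intpart v prm C y - a) + (y' - y)"
    using intpart_add_integral[of "y' - y" y] frac_ideal_antimono[of 0 "int k"] assms by simp
  show ?thesis
    using frac_ideal_add[OF _ assms, of "intpart v prm C y - a"]
      frac_ideal_diff[OF _ assms, of "intpart v prm C y' - a"]
    unfolding intpart_hits_def mem_vball mem_Collect_eq eq by auto
qed

lemma intpart_hits_Int_vball_0:
  assumes "a \<in> frac_ideal 0"
  shows "intpart_hits a k \<inter> vball y0 0 = vball (y0 - intpart v prm C y0 + a) (int k)"
    (is "_ = vball ?c _")
proof -
  have shift: "intpart v prm C y - a = y - ?c" if "y - y0 \<in> frac_ideal 0" for y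
    using intpart_add_integral[OF that, of y0] by (simp add: algebra_simps)
  have near: "y - y0 \<in> frac_ideal 0" if "y - ?c \<in> frac_ideal (int k)" for y
  proof -
    have "y - ?c \<in> frac_ideal 0" using frac_ideal_antimono[of 0 "int k"] that by simp
    from frac_ideal_diff[OF this frac_ideal_diff[OF intpart_in_valring[of y0] assms]]
    show ?thesis by (simp add: algebra_simps)
  qed
  show ?thesis
  proof (intro set_eqI iffI)
    fix y assume "y \<in> intpart_hits a k \<inter> vball y0 0"
    hence "intpart v prm C y - a \<in> frac_ideal (int k)" and y: "y - y0 \<in> frac_ideal 0"
      unfolding intpart_hits_def mem_vball Int_iff mem_Collect_eq by blast+
    thus "y \<in> vball ?c (int k)" unfolding mem_vball shift[OF y] by blast
  next
    fix y assume "y \<in> vball ?c (int k)"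
    hence c: "y - ?c \<in> frac_ideal (int k)" by (simp only: mem_vball)
    show "y \<in> intpart_hits a k \<inter> vball y0 0"
      unfolding intpart_hits_def mem_vball mem_Collect_eq Int_iff shift[OF near[OF c]]
      using c near[OF c] by blast
  qed
qed

lemma measure_intpart_hits_Int_vball:
  assumes "a \<in> frac_ideal 0" "l \<le> 0"
  shows "measure M (intpart_hits a k \<inter> vball z l) = real q powr (- real_of_int l - real k)"
proof -
  define T where "T = nat (- l)"
  have lT: "l + int T = 0" using assms(2) by (simp add: T_def)
  have "measure M (intpart_hits a k \<inter> vball z l) =
      (\<Sum>r\<in>coset_reps l T. measure M (intpart_hits a k \<inter> vball (z + r) (l + int T)))"
    by (rule measure_Int_vball_sum(2)) (simp add: lT intpart_hits_Int_vball_0[OF assms(1)])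
  also have "\<dots> = (\<Sum>r\<in>coset_reps l T. real q powr (- real k))"
    by (simp add: lT intpart_hits_Int_vball_0[OF assms(1)] measure_vball)
  also have "\<dots> = real q powr (- real_of_int l - real k)"
    using resq_gt_1 assms(2)
    by (simp add: card_coset_reps T_def powr_realpow[symmetric] powr_add[symmetric])
  finally show ?thesis .
qed

definition power_hits :: "'a \<Rightarrow> nat \<Rightarrow> 'a \<Rightarrow> nat \<Rightarrow> 'a set" where
  "power_hits \<alpha> n a k = {x. \<alpha> * x ^ n \<in> intpart_hits a k}"

lemma power_hits_cong_vball:
  assumes x: "x \<in> frac_ideal (- m)" and S: "S \<ge> - m" and \<alpha>: "\<alpha> \<noteq> 0"
    and k: "int k \<le> v \<alpha> + S + m - m * int n" and y: "y \<in> vball x S"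
  shows "y \<in> power_hits \<alpha> n a k \<longleftrightarrow> x \<in> power_hits \<alpha> n a k"
proof -
  have "y ^ n - x ^ n \<in> frac_ideal (S + m - m * int n)"
    using power_diff_in_frac_ideal[OF x _ S] y by (simp add: mem_vball)
  from frac_ideal_mult[OF in_frac_ideal_v[OF \<alpha>] this]
  have "\<alpha> * y ^ n - \<alpha> * x ^ n \<in> frac_ideal (v \<alpha> + (S + m - m * int n))"
    by (simp add: algebra_simps)
  moreover have "int k \<le> v \<alpha> + (S + m - m * int n)" using k by simp
  ultimately have "\<alpha> * y ^ n - \<alpha> * x ^ n \<in> frac_ideal (int k)"
    using frac_ideal_antimono by blast
  thus ?thesis unfolding power_hits_def using intpart_hits_cong by simp
qed

lemma measure_power_hits_Int_vball:
  assumes a: "a \<in> frac_ideal 0" and \<alpha>: "\<alpha> \<noteq> 0" and x: "x \<noteq> 0" "v x = - m"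
    and S: "S \<ge> - m" and n: "n \<ge> 1" "(of_nat n :: 'a) \<noteq> 0" "v (of_nat n) < S + m"
    and L: "v \<alpha> + v (of_nat n) - m * int (n - 1) + S \<le> 0"
  shows "power_hits \<alpha> n a k \<inter> vball x S \<in> sets M"
    and "measure M (power_hits \<alpha> n a k \<inter> vball x S) = real q powr (- real_of_int S - real k)"
proof -
  define L where "L = v \<alpha> + v (of_nat n) - m * int (n - 1) + S"
  have sim: "\<alpha> * y ^ n \<noteq> \<alpha> * y' ^ n \<and> v (\<alpha> * y ^ n - \<alpha> * y' ^ n) = L - S + v (y - y')"
    if "y \<in> vball x S" "y' \<in> vball x S" "y \<noteq> y'" for y y'
    using v_power_map_diff[OF x _ _ S n \<alpha>, of y y'] that by (simp add: mem_vball L_def)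
  have eq: "power_hits \<alpha> n a k = (\<lambda>y. \<alpha> * y ^ n) -` intpart_hits a k"
    by (auto simp: power_hits_def)
  note sim_measure = measure_similarity_vimage[where f = "\<lambda>y. \<alpha> * y ^ n", OF sim intpart_hits_cong]
  show "power_hits \<alpha> n a k \<inter> vball x S \<in> sets M"
    unfolding eq using L by (intro sim_measure(1)) (simp_all add: L_def)
  have "measure M (power_hits \<alpha> n a k \<inter> vball x S) =
      real q powr real_of_int (L - S) * real q powr (- real_of_int L - real k)"
    unfolding eq using L a
    by (simp add: sim_measure(2) L_def measure_intpart_hits_Int_vball)
  also have "\<dots> = real q powr (- real_of_int S - real k)"
    by (simp add: powr_add[symmetric])
  finally show "measure M (power_hits \<alpha> n a k \<inter> vball x S) = real q powr (- real_of_int S - real k)" .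
qed

lemma unif_distr_if_hit_frequencies:
  assumes "\<And>k a. a \<in> coset_reps 0 k \<Longrightarrow>
    (\<lambda>N. (\<Sum>j<N. indicator (power_hits \<alpha> (s j) a k) x) / real N) \<longlonglongrightarrow> real q powr (- real k)"
  shows "unif_distr v C (\<lambda>n. intpart v prm C (\<alpha> * x ^ s (n - 1)))"
  unfolding unif_distr_def
proof (intro conjI allI impI ballI)
  show "intpart v prm C (\<alpha> * x ^ s (n - 1)) \<in> valring v" for n
    using intpart_in_valring valring_eq by simp
next
  fix a k assume "a \<in> valring v"
  then obtain a' where a': "a' \<in> coset_reps 0 k" "a - a' \<in> frac_ideal (int k)"
    using coset_reps_cover[of a 0 k] valring_eq by auto
  have hit_iff: "intpart v prm C (\<alpha> * x ^ s j) \<in> disc v C a (- int k) \<longleftrightarrow>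
      x \<in> power_hits \<alpha> (s j) a' k" for j
    using frac_ideal_add[OF _ a'(2)] frac_ideal_diff[OF _ a'(2)]
    by (force simp: disc_eq power_hits_def intpart_hits_def mem_vball)
  have "{n \<in> {1..N}. intpart v prm C (\<alpha> * x ^ s (n - 1)) \<in> disc v C a (- int k)} =
      Suc ` {j \<in> {..<N}. x \<in> power_hits \<alpha> (s j) a' k}" for N
  proof (rule set_eqI)
    fix n
    show "n \<in> {n \<in> {1..N}. intpart v prm C (\<alpha> * x ^ s (n - 1)) \<in> disc v C a (- int k)} \<longleftrightarrow>
        n \<in> Suc ` {j \<in> {..<N}. x \<in> power_hits \<alpha> (s j) a' k}"
      by (cases n) (auto simp: hit_iff)
  qed
  hence "real (card {n \<in> {1..N}. intpart v prm C (\<alpha> * x ^ s (n - 1)) \<in> disc v C a (- int k)}) =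
      (\<Sum>j<N. indicator (power_hits \<alpha> (s j) a' k) x)" for N
    by (simp add: card_image indicator_def sum_of_bool_eq Int_def)
  thus "(\<lambda>N. real (card {n \<in> {1..N}. intpart v prm C (\<alpha> * x ^ s (n - 1)) \<in> disc v C a (- int k)})
      / real N) \<longlonglongrightarrow> real (resq C) powr - real k"
    using assms[OF a'(1)] by simp
qed

end

section \<open>Independence of hits on a leading-digit disc\<close>

locale power_subseq = local_field_haar v prm C M for v :: "'a::field \<Rightarrow> int" and prm C M +
  fixes \<alpha> :: 'a and s :: "nat \<Rightarrow> nat" and W :: int
  assumes \<alpha>_nonzero: "\<alpha> \<noteq> 0" and s_mono: "strict_mono s" and s_pos: "\<And>j. s j \<ge> 1"
    and s_nonzero: "\<And>j. (of_nat (s j) :: 'a) \<noteq> 0"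
    and v_s_growth: "\<And>j l. j < l ^ 4 \<Longrightarrow> v (of_nat (s j) :: 'a) \<le> W * int (l\<^sup>2)"

text \<open>lead_disc is the set of x with the valuation -m and the leading digit of x0, and hit j the
  event that [\<alpha> x^(s j)] lies in the disc of radius q^-k around a.\<close>

locale power_shell = power_subseq v prm C M \<alpha> s W
  for v :: "'a::field \<Rightarrow> int" and prm C M \<alpha> s W +
  fixes x0 :: 'a and m :: int and a :: 'a and k :: nat
  assumes x0_nonzero: "x0 \<noteq> 0" and v_x0: "v x0 = - m" and m_pos: "m \<ge> 1"
    and a_integral: "a \<in> frac_ideal 0"
begin

definition lead_disc :: "'a set" where
  "lead_disc = vball x0 (1 - m)"

definition hit :: "nat \<Rightarrow> 'a set" where
  "hit j = power_hits \<alpha> (s j) a k"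

definition density :: real where
  "density = real q powr (- real k)"

definition v_s :: "nat \<Rightarrow> int" where
  "v_s j = v (of_nat (s j) :: 'a)"

definition gap :: "nat \<Rightarrow> int" where
  "gap j = int k + \<bar>v \<alpha>\<bar> + 1 + 2 * v_s j"

definition decorrelated :: "nat \<Rightarrow> nat \<Rightarrow> bool" where
  "decorrelated i j \<longleftrightarrow> i < j \<and> int (s j) - int (s i) \<ge> gap j"

lemma v_s_nonneg: "v_s j \<ge> 0"
  using of_nat_in_valring[of "s j"] s_nonzero[of j] by (simp add: v_s_def frac_ideal_def)

lemma gap_pos: "gap j \<ge> 1"
  using v_s_nonneg[of j] by (simp add: gap_def)

lemma lead_disc_v: "x \<in> lead_disc \<Longrightarrow> x \<noteq> 0 \<and> v x = - m"
  using v_eq_if_close[OF x0_nonzero, of x] v_x0 frac_ideal_diff_commute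
  by (simp add: lead_disc_def mem_vball)

lemma sets_lead_disc [measurable]: "lead_disc \<in> sets M"
  by (simp add: lead_disc_def)

lemma emeasure_subset_lead_disc_finite: "A \<subseteq> lead_disc \<Longrightarrow> emeasure M A < \<infinity>"
  using emeasure_subset_vball_finite by (simp add: lead_disc_def less_top)

lemma piece_in_lead_disc: "r \<in> coset_reps (1 - m) T \<Longrightarrow> x0 + r \<in> lead_disc"
  by (simp add: lead_disc_def coset_rep_in_vball)

lemma power_hits_Int_piece:
  assumes "r \<in> coset_reps (1 - m) T" and "S = 1 - m + int T" and "int k - v \<alpha> + m * int n \<le> S"
  shows "power_hits \<alpha> n a k \<inter> vball (x0 + r) S =
           (if x0 + r \<in> power_hits \<alpha> n a k then vball (x0 + r) S else {})"
proof -
  have "x0 + r \<in> frac_ideal (- m)"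
    using lead_disc_v[OF piece_in_lead_disc[OF assms(1)]] by (simp add: frac_ideal_def)
  hence "y \<in> power_hits \<alpha> n a k \<longleftrightarrow> x0 + r \<in> power_hits \<alpha> n a k" if "y \<in> vball (x0 + r) S" for y
    using power_hits_cong_vball[OF _ _ \<alpha>_nonzero _ that] assms(2,3) m_pos by simp
  thus ?thesis by auto
qed

lemma sets_hit_Int_lead_disc [measurable]: "hit j \<inter> lead_disc \<in> sets M"
proof -
  define S where "S = max (1 - m) (int k - v \<alpha> + m * int (s j))"
  define T where "T = nat (S - (1 - m))"
  have ST: "S = 1 - m + int T" by (simp add: T_def S_def)
  have "hit j \<inter> vball (x0 + r) (1 - m + int T) \<in> sets M" if "r \<in> coset_reps (1 - m) T" for r
    using power_hits_Int_piece[OF that ST] ST by (simp add: S_def hit_def)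
  from measure_Int_vball_sum(1)[OF this] show ?thesis by (simp add: lead_disc_def)
qed

text \<open>A scale S at which hit i is constant on discs of radius q^-S in lead_disc, while
  x \<mapsto> \<alpha> x^(s j) still blows each of them up to a disc of radius at least 1. It exists because
  s j exceeds s i by at least gap j.\<close>

lemma decorrelating_scale:
  assumes "decorrelated i j"
  obtains S where "S \<ge> 1 - m" "int k - v \<alpha> + m * int (s i) \<le> S" "v_s j < S + m"
    "v \<alpha> + v_s j - m * int (s j - 1) + S \<le> 0"
proof -
  define S where "S = max (int k - v \<alpha> + m * int (s i)) (max (v_s j - m + 1) (1 - m))"
  have d: "int (s j) - int (s i) \<ge> int k + \<bar>v \<alpha>\<bar> + 1 + 2 * v_s j"
    using assms by (simp add: decorrelated_def gap_def)
  have w: "v_s j \<ge> 0" by (rule v_s_nonneg)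
  have sj: "int (s j - 1) = int (s j) - 1" using s_pos[of j] by simp
  have "m * (int (s j) - int (s i) - 1) \<ge> int (s j) - int (s i) - 1"
    using m_pos d w mult_right_mono[of 1 m "int (s j) - int (s i) - 1"] by simp
  moreover have "m * int (s j) \<ge> int (s j)"
    using m_pos mult_right_mono[of 1 m "int (s j)"] by simp
  ultimately have "S \<le> m * int (s j - 1) - v \<alpha> - v_s j"
    unfolding S_def sj using d w by (simp add: algebra_simps)
  moreover have "S \<ge> 1 - m" "int k - v \<alpha> + m * int (s i) \<le> S" "v_s j < S + m"
    by (auto simp: S_def)
  ultimately show ?thesis using that by simp
qed

lemma measure_hit_Int_vball:
  assumes x: "x \<in> lead_disc" and S: "S \<ge> 1 - m" "v_s j < S + m"
    "v \<alpha> + v_s j - m * int (s j - 1) + S \<le> 0"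
  shows "hit j \<inter> vball x S \<in> sets M"
    and "measure M (hit j \<inter> vball x S) = density * measure M (vball x S)"
proof -
  have "- m \<le> S" "v (of_nat (s j) :: 'a) < S + m"
    "v \<alpha> + v (of_nat (s j)) - m * int (s j - 1) + S \<le> 0"
    using S by (simp_all add: v_s_def)
  note hits = measure_power_hits_Int_vball[OF a_integral \<alpha>_nonzero _ _ this(1) s_pos s_nonzero this(2,3)]
  show "hit j \<inter> vball x S \<in> sets M" using hits(1) lead_disc_v[OF x] by (simp add: hit_def)
  have "real q powr (- real_of_int S - real k) = density * real q powr (- real_of_int S)"
    unfolding density_def powr_add[symmetric] by (rule arg_cong[where f = "(powr) (real q)"]) simp
  thus "measure M (hit j \<inter> vball x S) = density * measure M (vball x S)"
    using hits(2) lead_disc_v[OF x] by (simp add: hit_def measure_vball)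
qed

lemma decorrelated_measure:
  assumes "decorrelated i j"
  shows "measure M (hit j \<inter> lead_disc) = density * measure M lead_disc"
    and "measure M ((hit i \<inter> hit j) \<inter> lead_disc) = density * measure M (hit i \<inter> lead_disc)"
proof -
  obtain S where S: "S \<ge> 1 - m" "int k - v \<alpha> + m * int (s i) \<le> S" "v_s j < S + m"
    "v \<alpha> + v_s j - m * int (s j - 1) + S \<le> 0"
    using decorrelating_scale[OF assms] .
  define T where "T = nat (S - (1 - m))"
  have ST: "S = 1 - m + int T" using S(1) by (simp add: T_def)
  have fraction: "hit j \<inter> vball (x0 + r) S \<in> sets M \<and>
      measure M (hit j \<inter> vball (x0 + r) S) = density * measure M (vball (x0 + r) S)"
    if "r \<in> coset_reps (1 - m) T" for r
    using measure_hit_Int_vball[OF piece_in_lead_disc[OF that] S(1,3,4)] by simp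
  have const: "hit i \<inter> vball (x0 + r) S = (if x0 + r \<in> hit i then vball (x0 + r) S else {})"
    if "r \<in> coset_reps (1 - m) T" for r
    unfolding hit_def by (rule power_hits_Int_piece[OF that ST S(2)])
  show "measure M (hit j \<inter> lead_disc) = density * measure M lead_disc"
    using measure_Int_vball_scale[of "1 - m" T "hit j" x0 UNIV density] fraction ST
    by (simp add: lead_disc_def)
  have "(hit i \<inter> hit j) \<inter> vball (x0 + r) S \<in> sets M \<and> hit i \<inter> vball (x0 + r) S \<in> sets M \<and>
      measure M ((hit i \<inter> hit j) \<inter> vball (x0 + r) S) = density * measure M (hit i \<inter> vball (x0 + r) S)"
    if "r \<in> coset_reps (1 - m) T" for r
  proof -
    have "(hit i \<inter> hit j) \<inter> vball (x0 + r) S = hit j \<inter> (hit i \<inter> vball (x0 + r) S)" by blast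
    also have "\<dots> = (if x0 + r \<in> hit i then hit j \<inter> vball (x0 + r) S else {})"
      unfolding const[OF that] by simp
    finally show ?thesis using fraction[OF that] const[OF that] by simp
  qed
  thus "measure M ((hit i \<inter> hit j) \<inter> lead_disc) = density * measure M (hit i \<inter> lead_disc)"
    using measure_Int_vball_scale[of "1 - m" T "hit i \<inter> hit j" x0 "hit i" density] ST
    by (simp add: lead_disc_def)
qed

definition centred_hit :: "nat \<Rightarrow> 'a \<Rightarrow> real" where
  "centred_hit j x = indicator (hit j \<inter> lead_disc) x - density * indicator lead_disc x"

definition hit_cov :: "nat \<Rightarrow> nat \<Rightarrow> real" where
  "hit_cov i j = (\<integral>x. centred_hit i x * centred_hit j x \<partial>M)"

lemma density_pos: "density > 0" and density_le_1: "density \<le> 1"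
  using resq_gt_1 powr_mono[of "- real k" 0 "real q"] by (simp_all add: density_def)

lemma abs_centred_hit_le: "\<bar>centred_hit j x\<bar> \<le> indicator lead_disc x"
  using density_pos density_le_1
  by (cases "x \<in> lead_disc"; cases "x \<in> hit j") (auto simp: centred_hit_def indicator_def)

lemma centred_hit_outside: "x \<notin> lead_disc \<Longrightarrow> centred_hit j x = 0"
  by (simp add: centred_hit_def indicator_def)

lemma centred_hit_inside: "x \<in> lead_disc \<Longrightarrow> centred_hit j x = indicator (hit j) x - density"
  by (simp add: centred_hit_def indicator_def)

lemma centred_hit_measurable [measurable]: "centred_hit j \<in> borel_measurable M"
  unfolding centred_hit_def by measurable

lemma centred_hit_mult:
  "centred_hit i x * centred_hit j x =
     indicator ((hit i \<inter> hit j) \<inter> lead_disc) x - density * indicator (hit i \<inter> lead_disc) x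
     - density * indicator (hit j \<inter> lead_disc) x + density\<^sup>2 * indicator lead_disc x"
  by (cases "x \<in> lead_disc"; cases "x \<in> hit i"; cases "x \<in> hit j")
    (simp_all add: indicator_def centred_hit_def algebra_simps power2_eq_square)

lemma integrable_indicator_Int_lead_disc:
  "A \<in> sets M \<Longrightarrow> integrable M (indicator (A \<inter> lead_disc) :: 'a \<Rightarrow> real)"
  using emeasure_subset_lead_disc_finite[of "A \<inter> lead_disc"] by (intro integrable_real_indicator) auto

lemma integrable_hit_indicators:
  "integrable M (indicator ((hit i \<inter> hit j) \<inter> lead_disc) :: 'a \<Rightarrow> real)"
  "integrable M (indicator (hit i \<inter> lead_disc) :: 'a \<Rightarrow> real)"
  "integrable M (indicator lead_disc :: 'a \<Rightarrow> real)"
proof -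
  have "(hit i \<inter> hit j) \<inter> lead_disc = (hit i \<inter> lead_disc) \<inter> (hit j \<inter> lead_disc)" by blast
  hence "(hit i \<inter> hit j) \<inter> lead_disc \<in> sets M" by simp
  thus "integrable M (indicator ((hit i \<inter> hit j) \<inter> lead_disc) :: 'a \<Rightarrow> real)"
    using integrable_indicator_Int_lead_disc[of "(hit i \<inter> hit j) \<inter> lead_disc"] by (simp add: Int_absorb2)
  show "integrable M (indicator (hit i \<inter> lead_disc) :: 'a \<Rightarrow> real)"
    using integrable_indicator_Int_lead_disc[of "hit i \<inter> lead_disc"] by (simp add: Int_absorb2)
  show "integrable M (indicator lead_disc :: 'a \<Rightarrow> real)"
    using integrable_indicator_Int_lead_disc[of UNIV] sets.top[of M] space_M by simp
qed

lemma integrable_centred_hit_mult: "integrable M (\<lambda>x. centred_hit i x * centred_hit j x)"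
  unfolding centred_hit_mult
  using integrable_hit_indicators(1)[of i j] integrable_hit_indicators(2)[of i]
    integrable_hit_indicators(2)[of j] integrable_hit_indicators(3)
  by auto

lemma hit_cov_eq:
  "hit_cov i j = measure M ((hit i \<inter> hit j) \<inter> lead_disc) - density * measure M (hit i \<inter> lead_disc)
     - density * measure M (hit j \<inter> lead_disc) + density\<^sup>2 * measure M lead_disc"
  unfolding hit_cov_def centred_hit_mult
  using integrable_hit_indicators(1)[of i j] integrable_hit_indicators(2)[of i]
    integrable_hit_indicators(2)[of j] integrable_hit_indicators(3) space_M
  by simp

lemma hit_cov_commute: "hit_cov i j = hit_cov j i"
  by (simp add: hit_cov_def mult.commute)

lemma hit_cov_decorrelated: "decorrelated i j \<Longrightarrow> hit_cov i j = 0"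
  using decorrelated_measure[of i j] unfolding hit_cov_eq by (simp add: power2_eq_square)

lemma hit_cov_le: "hit_cov i j \<le> measure M lead_disc"
proof -
  have "hit_cov i j \<le> (\<integral>x. indicator lead_disc x \<partial>M)"
    unfolding hit_cov_def
  proof (rule integral_mono[OF integrable_centred_hit_mult integrable_hit_indicators(3)])
    fix x
    have "centred_hit i x * centred_hit j x \<le> \<bar>centred_hit i x\<bar> * \<bar>centred_hit j x\<bar>"
      by (simp add: abs_mult[symmetric])
    also have "\<dots> \<le> indicator lead_disc x * indicator lead_disc x"
      by (intro mult_mono abs_centred_hit_le) auto
    also have "\<dots> = indicator lead_disc x" by (simp add: indicator_def)
    finally show "centred_hit i x * centred_hit j x \<le> indicator lead_disc x" .
  qed
  thus ?thesis using space_M by simp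
qed

lemma integrable_sum_centred_hit_sq: "integrable M (\<lambda>x. (\<Sum>j<N. centred_hit j x)\<^sup>2)"
  and integral_sum_centred_hit_sq:
    "(\<integral>x. (\<Sum>j<N. centred_hit j x)\<^sup>2 \<partial>M) = (\<Sum>i<N. \<Sum>j<N. hit_cov i j)"
proof -
  have sq: "(\<Sum>j<N. centred_hit j x)\<^sup>2 = (\<Sum>i<N. \<Sum>j<N. centred_hit i x * centred_hit j x)" for x
    by (simp add: power2_eq_square sum_product)
  show "integrable M (\<lambda>x. (\<Sum>j<N. centred_hit j x)\<^sup>2)"
    unfolding sq using integrable_centred_hit_mult by auto
  show "(\<integral>x. (\<Sum>j<N. centred_hit j x)\<^sup>2 \<partial>M) = (\<Sum>i<N. \<Sum>j<N. hit_cov i j)"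
    unfolding sq hit_cov_def by (simp add: integrable_centred_hit_mult)
qed

lemma card_not_decorrelated: "card {i \<in> {..<j}. \<not> decorrelated i j} \<le> nat (gap j)"
proof -
  have "{i \<in> {..<j}. \<not> decorrelated i j} \<subseteq> {j - nat (gap j)..<j}"
  proof
    fix i assume "i \<in> {i \<in> {..<j}. \<not> decorrelated i j}"
    hence "i < j" "int (s j) - int (s i) < gap j" by (auto simp: decorrelated_def)
    thus "i \<in> {j - nat (gap j)..<j}" using strict_mono_diff_ge[OF s_mono, of i j] by auto
  qed
  hence "card {i \<in> {..<j}. \<not> decorrelated i j} \<le> card {j - nat (gap j)..<j}"
    by (intro card_mono) auto
  thus ?thesis by simp
qed

text \<open>Only the O(gap j) indices i < j not decorrelated from j contribute to the second moment.\<close>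

lemma integral_sum_centred_hit_sq_le:
  "(\<integral>x. (\<Sum>j<N. centred_hit j x)\<^sup>2 \<partial>M) \<le> measure M lead_disc * (\<Sum>j<N. 1 + 2 * real_of_int (gap j))"
proof -
  have bound: "(\<Sum>i<j. hit_cov i j) \<le> real_of_int (gap j) * measure M lead_disc" for j
  proof -
    have "(\<Sum>i<j. hit_cov i j) \<le> (\<Sum>i<j. if \<not> decorrelated i j then measure M lead_disc else 0)"
      by (rule sum_mono) (simp add: hit_cov_decorrelated hit_cov_le)
    also have "\<dots> = real (card {i \<in> {..<j}. \<not> decorrelated i j}) * measure M lead_disc"
      by (simp flip: sum.inter_filter)
    also have "\<dots> \<le> real_of_int (gap j) * measure M lead_disc"
      using card_not_decorrelated[of j] gap_pos[of j] measure_nonneg[of M lead_disc]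
      by (intro mult_right_mono) linarith+
    finally show ?thesis .
  qed
  have "hit_cov j j + 2 * (\<Sum>i<j. hit_cov i j) \<le> measure M lead_disc * (1 + 2 * real_of_int (gap j))"
    for j using hit_cov_le[of j j] bound[of j] by (simp add: algebra_simps)
  hence "(\<Sum>j<N. hit_cov j j + 2 * (\<Sum>i<j. hit_cov i j)) \<le>
      (\<Sum>j<N. measure M lead_disc * (1 + 2 * real_of_int (gap j)))"
    by (intro sum_mono)
  thus ?thesis
    by (simp add: integral_sum_centred_hit_sq sum_sum_symmetric[OF hit_cov_commute] sum_distrib_left)
qed

definition var_const :: real where
  "var_const = 1 + 2 * real_of_int (int k + \<bar>v \<alpha>\<bar> + 1) + 4 * real_of_int W"

lemma sum_gap_le:
  assumes "l \<ge> 1"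
  shows "(\<Sum>j<l ^ 4. 1 + 2 * real_of_int (gap j)) \<le> real (l ^ 4) * (var_const * real l ^ 2)"
proof -
  have "1 + 2 * real_of_int (gap j) \<le> var_const * real l ^ 2" if "j < l ^ 4" for j
  proof -
    have "real_of_int (v_s j) \<le> real_of_int (W * int (l\<^sup>2))"
      using v_s_growth[OF that] unfolding v_s_def of_int_le_iff .
    hence vs: "real_of_int (v_s j) \<le> real_of_int W * real l ^ 2" by simp
    define c where "c = 1 + 2 * real_of_int (int k + \<bar>v \<alpha>\<bar> + 1)"
    have "c \<le> c * real l ^ 2"
      using assms mult_left_mono[of 1 "real l ^ 2" c] by (simp add: c_def)
    moreover have "1 + 2 * real_of_int (gap j) = c + 4 * real_of_int (v_s j)"
      by (simp add: gap_def c_def)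
    moreover have "var_const * real l ^ 2 = c * real l ^ 2 + 4 * (real_of_int W * real l ^ 2)"
      by (simp add: var_const_def c_def distrib_right)
    ultimately show ?thesis using vs by linarith
  qed
  hence "(\<Sum>j<l ^ 4. 1 + 2 * real_of_int (gap j)) \<le>
      of_nat (card {..<l ^ 4}) * (var_const * real l ^ 2)"
    by (intro sum_bounded_above) simp
  thus ?thesis by simp
qed

lemma measure_large_partial_sum_le:
  assumes "\<epsilon> > 0" "l \<ge> 1"
  shows "measure M {x \<in> space M. (\<epsilon> * real (l ^ 4))\<^sup>2 \<le> (\<Sum>j<l ^ 4. centred_hit j x)\<^sup>2}
           \<le> measure M lead_disc * var_const / (\<epsilon>\<^sup>2 * real l ^ 2)"
proof -
  define N where "N = l ^ 4"
  have pos: "(\<epsilon> * real N)\<^sup>2 > 0" using assms by (simp add: N_def)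
  have "measure M {x \<in> space M. (\<epsilon> * real N)\<^sup>2 \<le> (\<Sum>j<N. centred_hit j x)\<^sup>2}
      \<le> (\<integral>x. (\<Sum>j<N. centred_hit j x)\<^sup>2 \<partial>M) / (\<epsilon> * real N)\<^sup>2"
    by (rule integral_Markov_inequality_measure[OF integrable_sum_centred_hit_sq sets_lead_disc _ pos])
      simp
  also have "\<dots> \<le> measure M lead_disc * (real N * (var_const * real l ^ 2)) / (\<epsilon> * real N)\<^sup>2"
  proof (rule divide_right_mono)
    have "(\<integral>x. (\<Sum>j<N. centred_hit j x)\<^sup>2 \<partial>M) \<le>
        measure M lead_disc * (\<Sum>j<N. 1 + 2 * real_of_int (gap j))"
      by (rule integral_sum_centred_hit_sq_le)
    also have "\<dots> \<le> measure M lead_disc * (real N * (var_const * real l ^ 2))"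
      using sum_gap_le[OF assms(2)] by (intro mult_left_mono) (auto simp: N_def)
    finally show "(\<integral>x. (\<Sum>j<N. centred_hit j x)\<^sup>2 \<partial>M) \<le>
        measure M lead_disc * (real N * (var_const * real l ^ 2))" .
  qed simp
  also have "\<dots> = measure M lead_disc * var_const / (\<epsilon>\<^sup>2 * real l ^ 2)"
    using assms by (simp add: N_def field_simps power_def)
  finally show ?thesis by (simp add: N_def)
qed

text \<open>Chebyshev's inequality along the fourth powers gives summable bounds O(l^-2), then
  Borel-Cantelli.\<close>

lemma AE_eventually_small_partial_sum:
  assumes "\<epsilon> > 0"
  shows "AE x in M. eventually
           (\<lambda>l. (\<Sum>j<(l + 1) ^ 4. centred_hit j x)\<^sup>2 < (\<epsilon> * real ((l + 1) ^ 4))\<^sup>2) sequentially"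
proof -
  define A where "A l = {x \<in> space M. (\<epsilon> * real ((l + 1) ^ 4))\<^sup>2 \<le> (\<Sum>j<(l + 1) ^ 4. centred_hit j x)\<^sup>2}"
    for l
  have A_sets: "A l \<in> sets M" for l unfolding A_def by measurable
  have "A l \<subseteq> lead_disc" for l
  proof
    fix x assume x: "x \<in> A l"
    show "x \<in> lead_disc"
    proof (rule ccontr)
      assume "x \<notin> lead_disc"
      hence "(\<Sum>j<(l + 1) ^ 4. centred_hit j x) = 0" by (simp add: centred_hit_outside)
      thus False using x assms by (simp add: A_def)
    qed
  qed
  hence A_finite: "emeasure M (A l) < \<infinity>" for l by (rule emeasure_subset_lead_disc_finite)
  have "summable (\<lambda>l. inverse (real (Suc l) ^ 2))"
    using inverse_power_summable[of 2, where 'a = real] by (subst summable_Suc_iff) simp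
  hence "summable (\<lambda>l. measure M (A l))"
  proof (rule summable_comparison_test'[OF summable_mult[of _ "measure M lead_disc * var_const / \<epsilon>\<^sup>2"]])
    fix l :: nat
    have "measure M (A l) \<le> measure M lead_disc * var_const / (\<epsilon>\<^sup>2 * real (l + 1) ^ 2)"
      unfolding A_def using measure_large_partial_sum_le[OF assms, of "l + 1"] by simp
    thus "norm (measure M (A l)) \<le> measure M lead_disc * var_const / \<epsilon>\<^sup>2 * inverse (real (Suc l) ^ 2)"
      by (simp add: field_simps)
  qed
  from borel_cantelli_AE1[OF A_sets A_finite this]
  show ?thesis by eventually_elim (auto elim!: eventually_mono simp: A_def space_M not_le)
qed

lemma hit_frequency_if_sparse_partial_sums:
  assumes x: "x \<in> lead_disc"
    and sparse: "\<And>i. eventually (\<lambda>l. (\<Sum>j<(l + 1) ^ 4. centred_hit j x)\<^sup>2 <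
                   (real ((l + 1) ^ 4) / real (Suc i))\<^sup>2) sequentially"
  shows "(\<lambda>N. (\<Sum>j<N. indicator (hit j) x) / real N) \<longlonglongrightarrow> density"
proof -
  define S where "S N = (\<Sum>j<N. centred_hit j x)" for N
  have "(\<lambda>N. S N / real N) \<longlonglongrightarrow> 0"
  proof (rule tendsto_zero_if_fourth_powers)
    show "\<bar>S (Suc N) - S N\<bar> \<le> 1" for N
      using abs_centred_hit_le[of N x] x by (simp add: S_def indicator_def)
    show "eventually (\<lambda>l. \<bar>S ((l + 1) ^ 4)\<bar> < real ((l + 1) ^ 4) / real (Suc i)) sequentially" for i
      using sparse[of i]
    proof eventually_elim
      case (elim l)
      hence "\<bar>S ((l + 1) ^ 4)\<bar>\<^sup>2 < (real ((l + 1) ^ 4) / real (Suc i))\<^sup>2" by (simp add: S_def)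
      thus ?case by (rule power_less_imp_less_base) simp
    qed
  qed
  hence "(\<lambda>N. S N / real N + density) \<longlonglongrightarrow> 0 + density" by (intro tendsto_add) auto
  moreover have "eventually (\<lambda>N. S N / real N + density = (\<Sum>j<N. indicator (hit j) x) / real N)
      sequentially"
    using eventually_gt_at_top[of 0]
    by eventually_elim (simp add: S_def centred_hit_inside[OF x] sum_subtractf field_simps)
  ultimately show ?thesis by (simp add: tendsto_cong)
qed

lemma AE_hit_frequency:
  "AE x in M. x \<in> lead_disc \<longrightarrow> (\<lambda>N. (\<Sum>j<N. indicator (hit j) x) / real N) \<longlonglongrightarrow> density"
proof -
  have "AE x in M. \<forall>i. eventually (\<lambda>l. (\<Sum>j<(l + 1) ^ 4. centred_hit j x)\<^sup>2 <
      (real ((l + 1) ^ 4) / real (Suc i))\<^sup>2) sequentially"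
  proof (subst AE_all_countable, intro allI)
    fix i :: nat
    show "AE x in M. eventually (\<lambda>l. (\<Sum>j<(l + 1) ^ 4. centred_hit j x)\<^sup>2 <
        (real ((l + 1) ^ 4) / real (Suc i))\<^sup>2) sequentially"
      using AE_eventually_small_partial_sum[of "1 / real (Suc i)"] by simp
  qed
  thus ?thesis by eventually_elim (use hit_frequency_if_sparse_partial_sums in blast)
qed

end

section \<open>Almost sure equidistribution\<close>

context power_subseq
begin

lemma AE_hit_frequency_leading_digit:
  assumes c: "c \<in> C" "c \<noteq> 0" and m: "m \<ge> 1" and a: "a \<in> frac_ideal 0"
  shows "AE x in M. x \<in> vball (c * pi_pow (- m)) (1 - m) \<longrightarrow>
     (\<lambda>N. (\<Sum>j<N. indicator (power_hits \<alpha> (s j) a k) x) / real N) \<longlonglongrightarrow> real q powr (- real k)"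
proof -
  interpret power_shell v prm C M \<alpha> s W "c * pi_pow (- m)" m a k
    using c m a v_mult[OF c(2) pi_pow_nonzero] v_C[OF c] by unfold_locales simp_all
  show ?thesis using AE_hit_frequency unfolding lead_disc_def hit_def density_def .
qed

lemma AE_all_hit_frequencies:
  "AE x in M. \<forall>m::nat. \<forall>k. \<forall>c\<in>C. \<forall>a\<in>coset_reps 0 k. c \<noteq> 0 \<longrightarrow>
     x \<in> vball (c * pi_pow (- int (Suc m))) (- int m) \<longrightarrow>
     (\<lambda>N. (\<Sum>j<N. indicator (power_hits \<alpha> (s j) a k) x) / real N) \<longlonglongrightarrow> real q powr (- real k)"
proof -
  have "AE x in M. c \<noteq> 0 \<longrightarrow> x \<in> vball (c * pi_pow (- int (Suc m))) (- int m) \<longrightarrow>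
      (\<lambda>N. (\<Sum>j<N. indicator (power_hits \<alpha> (s j) a k) x) / real N) \<longlonglongrightarrow> real q powr (- real k)"
    if "c \<in> C" "a \<in> coset_reps 0 k" for m k c a
    using AE_hit_frequency_leading_digit[OF that(1) _ _ coset_reps_subset[OF that(2)], of "int (Suc m)"]
    by (cases "c = 0") simp_all
  thus ?thesis
    by (simp only: AE_all_countable AE_ball_countable[OF countable_finite[OF finite_C]]
        AE_ball_countable[OF countable_finite[OF finite_coset_reps]]) blast
qed

theorem AE_unif_distr_power_subseq:
  "AE x in M. absp v C x > 1 \<longrightarrow> unif_distr v C (\<lambda>n. intpart v prm C (\<alpha> * x ^ s (n - 1)))"
  using AE_all_hit_frequencies
proof eventually_elim
  case (elim x)
  show ?case
  proof
    assume "absp v C x > 1"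
    hence x: "x \<noteq> 0" "v x < 0" using absp_gt_1_iff by auto
    define m where "m = nat (- v x) - 1"
    have m: "- int (Suc m) = v x" using x(2) by (simp add: m_def)
    have "x \<in> frac_ideal (- int (Suc m))" using m by (simp add: frac_ideal_def)
    then obtain c where c: "c \<in> C"
      "x - c * pi_pow (- int (Suc m)) \<in> frac_ideal (- int (Suc m) + 1)"
      using digit_ex1 by blast
    hence x_disc: "x \<in> vball (c * pi_pow (- int (Suc m))) (- int m)" by (simp add: mem_vball)
    have "c \<noteq> 0"
    proof
      assume "c = 0"
      hence "x \<in> frac_ideal (- int m)" using x_disc by (simp add: mem_vball)
      thus False using x m by (simp add: frac_ideal_def)
    qed
    show "unif_distr v C (\<lambda>n. intpart v prm C (\<alpha> * x ^ s (n - 1)))"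
    proof (rule unif_distr_if_hit_frequencies)
      fix k a assume "a \<in> coset_reps 0 k"
      thus "(\<lambda>N. (\<Sum>j<N. indicator (power_hits \<alpha> (s j) a k) x) / real N) \<longlonglongrightarrow> real q powr (- real k)"
        using elim c(1) \<open>c \<noteq> 0\<close> x_disc by blast
    qed
  qed
qed

end

context local_field_haar
begin

lemma AE_unif_distr_powers_char_0:
  assumes char: "CHAR('a) = 0" and \<alpha>: "\<alpha> \<noteq> 0"
  shows "AE x in M. absp v C x > 1 \<longrightarrow> unif_distr v C (\<lambda>n. intpart v prm C (\<alpha> * x ^ n))"
proof -
  have nonzero: "(of_nat (Suc j) :: 'a) \<noteq> 0" for j
    unfolding of_nat_eq_0_iff_char_dvd char by simp
  interpret power_subseq v prm C M \<alpha> Suc "4 * max 0 (v (of_nat res_char))"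
    using \<alpha> nonzero v_of_nat_le_sqrt_bound[OF _ nonzero]
    by unfold_locales (simp_all add: strict_mono_Suc_iff Suc_le_eq)
  have "unif_distr v C (\<lambda>n. intpart v prm C (\<alpha> * x ^ Suc (n - 1))) \<longleftrightarrow>
      unif_distr v C (\<lambda>n. intpart v prm C (\<alpha> * x ^ n))" for x
    by (rule unif_distr_cong) simp
  thus ?thesis using AE_unif_distr_power_subseq by simp
qed

lemma AE_unif_distr_powers_char_p:
  assumes char: "CHAR('a) = p" "p > 0" and \<alpha>: "\<alpha> \<noteq> 0"
  shows "AE x in M. absp v C x > 1 \<longrightarrow>
    unif_distr v C (\<lambda>m. intpart v prm C (\<alpha> * x ^ enumerate {n. n \<ge> 1 \<and> \<not> p dvd n} (m - 1)))"
proof -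
  let ?S = "{n. n \<ge> 1 \<and> \<not> p dvd n}"
  have "infinite ?S"
    using char prime_CHAR_semidom[where 'a = 'a] by (intro infinite_not_dvd prime_gt_1_nat) simp
  hence S: "enumerate ?S j \<in> ?S" for j by (rule enumerate_in_set)
  have "(of_nat (enumerate ?S j) :: 'a) \<noteq> 0 \<and> v (of_nat (enumerate ?S j)) = 0" for j
    using v_of_nat_eq_0_if_not_dvd_char[OF char] S[of j] by simp
  then interpret power_subseq v prm C M \<alpha> "enumerate ?S" 0
    using \<alpha> S strict_mono_enumerate[OF \<open>infinite ?S\<close>] by unfold_locales simp_all
  show ?thesis by (rule AE_unif_distr_power_subseq)
qed

end

theorem theorem1p1:
  fixes v :: "'a::field \<Rightarrow> int" and prm :: 'a and C :: "'a set"
    and M :: "'a measure" and \<alpha> :: 'a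
  assumes "nonarch_local_field v prm C"
    and "haar_p v C M"
    and "\<alpha> \<noteq> 0"
  shows "(CHAR('a) = 0 \<longrightarrow>
           (AE x in M. absp v C x > 1 \<longrightarrow>
              unif_distr v C (\<lambda>n. intpart v prm C (\<alpha> * x ^ n))))
       \<and> (\<forall>p. CHAR('a) = p \<and> p > 0 \<longrightarrow>
           (AE x in M. absp v C x > 1 \<longrightarrow>
              unif_distr v C (\<lambda>m. intpart v prm C
                 (\<alpha> * x ^ enumerate {n. n \<ge> 1 \<and> \<not> p dvd n} (m - 1)))))"
proof -
  interpret local_field_haar v prm C M
    using assms(1,2) by unfold_locales
  show ?thesis
    using AE_unif_distr_powers_char_0 AE_unif_distr_powers_char_p assms(3) by blast
qed

end
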